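(* Let $m,n\in\mathbb{N}$, $\epsilon\in\{1,-1\}$, $\sigma\in\{1,-1\}$, and let $S$ ($n\times n$), $U$ ($m\times n$), $V$ ($n\times m$) be constant complex matrices, $S$ invertible in the discrete cases. Suppose $K$ is an $n\times n$ matrix satisfying $SK+KS^*=VU$ (continuous case) or $S^{-1}K-KS^*=VU$ (semi- and fully discrete cases), and let $\Xi=e^{-xS-\mathrm{i}tS^2}$ ($x,t\in\mathbb{R}$; continuous), $\Xi=S^xe^{-\mathrm{i}t\omega(S)}$ ($x\in\mathbb{Z},t\in\mathbb{R}$; semi-discrete), $\Xi=S^x\Omega(S)^t$ ($x,t\in\mathbb{Z}$; fully discrete), with $\omega(S)=S+S^{-1}-2I_n$ and $\Omega(S)=[I_n+\mathrm{i}(I_n-S^{-1})][I_n-\mathrm{i}(I_n-S)]^{-1}$. Then (wherever the inverses exist) $$q=\sigma\,U\big((\Xi^* )^{-1}-\epsilon K^*\Xi K\big)^{-1}V^*,\qquad p=\epsilon\,U\Xi^*K^*\big(\Xi^{-1}-\epsilon K\Xi^*K^*\big)^{-1}V$$ solve, respectively, the $m\times m$ matrix continuous NLS equations $\mathrm{i}q_t+q_{xx}-2\epsilon qq^*q=0$, $p_x=-\epsilon qq^*$; the semi-discrete equations $\mathrm{i}\dot q+q^+-2q+q^--\epsilon(q^+q^*q+qq^*q^-)=0$, $p^+-p=-\epsilon q^+q^*$; and the fully discrete equations $\mathrm{i}(q_+-q)+(q^+-q)_+-(q-q^-)-\epsilon(q^+q^*q)_+-\epsilon qq^*q^-+(p_+-p)q_++q(p_+-p)^*=0$,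 $p^+-p=-\epsilon q^+q^*$.
   Context: ${}^*$ denotes entrywise complex conjugation (not conjugate transpose). $f^\pm(x,t)=f(x\pm1,t)$, $f_\pm(x,t)=f(x,t\pm1)$, $\dot f=\partial_t f$. $q,p$ are $m\times m$ matrix functions. *)

theory Defs
  imports "HOL-Analysis.Analysis"
begin

text \<open>Matrices are elements of complex^'c^'r (r rows, c columns); dimensions are
  the cardinalities of the finite index types.\<close>

text \<open>Entrywise complex conjugation (NOT conjugate transpose).\<close>
definition mconj :: "complex^'c^'r \<Rightarrow> complex^'c^'r" where
  "mconj A = (\<chi> i j. cnj (A $ i $ j))"

definition csc :: "complex \<Rightarrow> complex^'c^'r \<Rightarrow> complex^'c^'r" where
  "csc c A = (\<chi> i j. c * A $ i $ j)"

primrec mpow :: "complex^'n^'n \<Rightarrow> nat \<Rightarrow> complex^'n^'n" where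
  "mpow A 0 = mat 1"
| "mpow A (Suc k) = A ** mpow A k"

definition mexp :: "complex^'n^'n \<Rightarrow> complex^'n^'n" where
  "mexp A = (\<Sum>k. (1 / fact k) *\<^sub>R mpow A k)"

definition mzpow :: "complex^'n^'n \<Rightarrow> int \<Rightarrow> complex^'n^'n" where
  "mzpow A k = (if 0 \<le> k then mpow A (nat k) else mpow (matrix_inv A) (nat (- k)))"

definition omegaS :: "complex^'n^'n \<Rightarrow> complex^'n^'n" where
  "omegaS S = S + matrix_inv S - 2 *\<^sub>R mat 1"

definition OmegaS :: "complex^'n^'n \<Rightarrow> complex^'n^'n" where
  "OmegaS S = (mat 1 + csc \<i> (mat 1 - matrix_inv S)) ** matrix_inv (mat 1 - csc \<i> (mat 1 - S))"

definition Xi_c :: "complex^'n^'n \<Rightarrow> real \<Rightarrow> real \<Rightarrow> complex^'n^'n" where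
  "Xi_c S x t = mexp (- (x *\<^sub>R S) - csc \<i> (t *\<^sub>R (S ** S)))"

definition Xi_sd :: "complex^'n^'n \<Rightarrow> int \<Rightarrow> real \<Rightarrow> complex^'n^'n" where
  "Xi_sd S x t = mzpow S x ** mexp (- csc \<i> (t *\<^sub>R omegaS S))"

definition Xi_fd :: "complex^'n^'n \<Rightarrow> int \<Rightarrow> int \<Rightarrow> complex^'n^'n" where
  "Xi_fd S x t = mzpow S x ** mzpow (OmegaS S) t"

definition qsol :: "real \<Rightarrow> real \<Rightarrow> complex^'n^'m \<Rightarrow> complex^'m^'n \<Rightarrow> complex^'n^'n
    \<Rightarrow> complex^'n^'n \<Rightarrow> complex^'m^'m" where
  "qsol \<sigma> \<epsilon> U V K Xi =
     \<sigma> *\<^sub>R (U ** matrix_inv (matrix_inv (mconj Xi) - \<epsilon> *\<^sub>R (mconj K ** Xi ** K)) ** mconj V)"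

definition psol :: "real \<Rightarrow> complex^'n^'m \<Rightarrow> complex^'m^'n \<Rightarrow> complex^'n^'n
    \<Rightarrow> complex^'n^'n \<Rightarrow> complex^'m^'m" where
  "psol \<epsilon> U V K Xi =
     \<epsilon> *\<^sub>R (U ** mconj Xi ** mconj K ** matrix_inv (matrix_inv Xi - \<epsilon> *\<^sub>R (K ** mconj Xi ** mconj K)) ** V)"

definition inv_ok :: "real \<Rightarrow> complex^'n^'n \<Rightarrow> complex^'n^'n \<Rightarrow> bool" where
  "inv_ok \<epsilon> K Xi \<longleftrightarrow> invertible Xi \<and> invertible (mconj Xi)
     \<and> invertible (matrix_inv (mconj Xi) - \<epsilon> *\<^sub>R (mconj K ** Xi ** K))
     \<and> invertible (matrix_inv Xi - \<epsilon> *\<^sub>R (K ** mconj Xi ** mconj K))"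

end

theory Submission
  imports Defs
begin

(*
  Write Xi' for the entrywise conjugate of Xi and put  A = inv Xi' - eps K' Xi K,
  B = inv Xi - eps K Xi' K' (so B = A'),  R = inv A,  Q = inv B.  Then q = sig U R V', and the
  push-through identity  R K' Xi = Xi' K' Q  gives  p = eps U R K' Xi V  and  q' = sig U' Q V.
  Every claim thus becomes an identity for the resolvent R:
  - a discrete x-step replaces Xi by S Xi; comparing R(S Xi) with R(Xi) via the Sylvester
    equation yields p(x+1) - p(x) = -eps q(x+1) q(x)' and formulas for q(x+1), q(x-1);
  - the time evolution is handled by differentiating R (continuous and semi-discrete cases)
    or by comparing R(Omega Xi) with R(Xi) (fully discrete case).
*)

section \<open>Matrix algebra\<close>

lemma matrix_mul_scaleR_left: "(c *\<^sub>R (A::complex^'n^'m)) ** B = c *\<^sub>R (A ** B)"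
  by (simp add: scalar_matrix_assoc)

lemma matrix_mul_scaleR_right: "(A::complex^'n^'m) ** (c *\<^sub>R B) = c *\<^sub>R (A ** B)"
  by (simp add: matrix_scalar_ac scalar_matrix_assoc)

lemma matrix_add_rdistrib: "(A + B) ** (C::complex^'p^'n) = A ** C + B ** C"
  by (simp add: vec_eq_iff matrix_matrix_mult_def algebra_simps sum.distrib)

lemma matrix_diff_rdistrib: "(A - B) ** (C::complex^'p^'n) = A ** C - B ** C"
  by (simp add: vec_eq_iff matrix_matrix_mult_def algebra_simps sum_subtractf)

lemma matrix_diff_ldistrib: "(C::complex^'n^'m) ** (A - B) = C ** A - C ** B"
  by (simp add: vec_eq_iff matrix_matrix_mult_def algebra_simps sum_subtractf)

lemma matrix_mul_neg_left: "(- A) ** (C::complex^'p^'n) = - (A ** C)"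
  by (simp add: vec_eq_iff matrix_matrix_mult_def sum_negf)

lemma matrix_mul_neg_right: "(C::complex^'n^'m) ** (- A) = - (C ** A)"
  by (simp add: vec_eq_iff matrix_matrix_mult_def sum_negf)

text \<open>Rewriting with these rules brings a matrix expression into a normal form: a sum of
  right-nested products with real scalars pulled out.\<close>
lemmas matrix_expand = matrix_mul_assoc[symmetric] matrix_add_ldistrib matrix_add_rdistrib
  matrix_diff_ldistrib matrix_diff_rdistrib matrix_mul_neg_left matrix_mul_neg_right
  matrix_mul_scaleR_left matrix_mul_scaleR_right

lemma bounded_bilinear_matrix_mul:
  "bounded_bilinear ((**) :: complex^'n^'m \<Rightarrow> complex^'p^'n \<Rightarrow> complex^'p^'m)"
  unfolding bilinear_conv_bounded_bilinear[symmetric] bilinear_def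
  by (auto intro!: linearI simp: matrix_add_ldistrib matrix_add_rdistrib
      matrix_mul_scaleR_left matrix_mul_scaleR_right)

lemma commute_mul_right: "A ** B = B ** A \<Longrightarrow> A ** (B ** Z) = B ** (A ** (Z::complex^'p^'n))"
  by (simp add: matrix_mul_assoc)

lemma matrix_inv_right: "invertible A \<Longrightarrow> A ** matrix_inv A = mat 1"
  unfolding invertible_def matrix_inv_def by (metis (mono_tags, lifting) someI)

lemma matrix_inv_left: "invertible A \<Longrightarrow> matrix_inv A ** A = mat 1"
  unfolding invertible_def matrix_inv_def by (metis (mono_tags, lifting) someI)

lemma matrix_inv_cancel:
  assumes "invertible (M::complex^'n^'n)"
  shows "M ** matrix_inv M = mat 1" "matrix_inv M ** M = mat 1"
    "\<And>Z::complex^'p^'n. M ** (matrix_inv M ** Z) = Z" "\<And>Z::complex^'p^'n. matrix_inv M ** (M ** Z) = Z"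
  using matrix_inv_right[OF assms] matrix_inv_left[OF assms] by (simp_all add: matrix_mul_assoc)

lemma matrix_inv_unique:
  fixes A B :: "complex^'n^'n" assumes "A ** B = mat 1" shows "matrix_inv A = B"
proof -
  have "invertible A" using assms invertible_right_inverse by blast
  then have "matrix_inv A = matrix_inv A ** (A ** B)" using assms by simp
  also have "\<dots> = B" using \<open>invertible A\<close> by (simp add: matrix_inv_cancel)
  finally show ?thesis .
qed

lemma invertible_matrix_inv: "invertible (A::complex^'n^'n) \<Longrightarrow> invertible (matrix_inv A)"
  using matrix_inv_left invertible_right_inverse by blast

lemma matrix_inv_inv: "invertible (A::complex^'n^'n) \<Longrightarrow> matrix_inv (matrix_inv A) = A"
  by (rule matrix_inv_unique) (rule matrix_inv_left)

lemma matrix_inv_mult: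
  fixes A B :: "complex^'n^'n" assumes "invertible A" "invertible B"
  shows "matrix_inv (A ** B) = matrix_inv B ** matrix_inv A"
  by (rule matrix_inv_unique) (simp add: matrix_expand matrix_inv_cancel[OF assms(1)] matrix_inv_cancel[OF assms(2)])

lemma matrix_inv_commute:
  assumes c: "A ** B = B ** A" and i: "invertible (A::complex^'n^'n)"
  shows "matrix_inv A ** B = B ** matrix_inv A"
proof -
  have "matrix_inv A ** B = matrix_inv A ** (B ** (A ** matrix_inv A))" by (simp add: matrix_inv_cancel[OF i])
  also have "\<dots> = matrix_inv A ** (A ** B) ** matrix_inv A" by (simp add: matrix_mul_assoc c)
  also have "\<dots> = B ** matrix_inv A" by (simp add: matrix_expand matrix_inv_cancel[OF i])
  finally show ?thesis .
qed

lemma mconj_mult: "mconj ((A::complex^'n^'m) ** (B::complex^'p^'n)) = mconj A ** mconj B"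
  by (simp add: mconj_def matrix_matrix_mult_def vec_eq_iff)

lemma mconj_add: "mconj (A + B) = mconj A + mconj B"
  by (simp add: mconj_def vec_eq_iff)

lemma mconj_diff: "mconj (A - B) = mconj A - mconj B"
  by (simp add: mconj_def vec_eq_iff)

lemma mconj_neg: "mconj (- A) = - mconj A"
  by (simp add: mconj_def vec_eq_iff)

lemma mconj_scaleR: "mconj (r *\<^sub>R A) = r *\<^sub>R mconj A"
  by (simp add: mconj_def vec_eq_iff)

lemma mconj_mconj: "mconj (mconj A) = A"
  by (simp add: mconj_def vec_eq_iff)

lemma mconj_mat1: "mconj (mat 1) = mat 1"
  by (simp add: mconj_def vec_eq_iff mat_def)

lemma mconj_csc: "mconj (csc c A) = csc (cnj c) (mconj A)"
  by (simp add: mconj_def csc_def vec_eq_iff)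

lemma invertible_mconj: "invertible A \<Longrightarrow> invertible (mconj (A::complex^'n^'m))"
  unfolding invertible_def by (metis mconj_mult mconj_mat1)

lemma mconj_matrix_inv: "invertible (A::complex^'n^'n) \<Longrightarrow> mconj (matrix_inv A) = matrix_inv (mconj A)"
  by (metis matrix_inv_unique matrix_inv_right mconj_mult mconj_mat1)

lemmas mconj_distrib = mconj_mult mconj_add mconj_diff mconj_neg mconj_scaleR mconj_mconj mconj_mat1

lemma bounded_linear_mconj: "bounded_linear (mconj :: complex^'n^'m \<Rightarrow> complex^'n^'m)"
  unfolding linear_conv_bounded_linear[symmetric]
  by (rule linearI) (simp_all add: mconj_add mconj_scaleR)

lemma csc_scaleR: "csc c (r *\<^sub>R A) = r *\<^sub>R csc c A"
  by (simp add: csc_def vec_eq_iff scaleR_conv_of_real)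

lemma csc_mult_left: "csc c (A::complex^'n^'m) ** (B::complex^'p^'n) = csc c (A ** B)"
  by (simp add: csc_def matrix_matrix_mult_def vec_eq_iff sum_distrib_left mult.assoc)

lemma csc_mult_right: "(A::complex^'n^'m) ** csc c (B::complex^'p^'n) = csc c (A ** B)"
  by (simp add: csc_def matrix_matrix_mult_def vec_eq_iff sum_distrib_left mult_ac)

lemma csc_add: "csc c (A + B) = csc c A + csc c B"
  by (simp add: csc_def vec_eq_iff algebra_simps)

lemma csc_diff: "csc c (A - B) = csc c A - csc c B"
  by (simp add: csc_def vec_eq_iff algebra_simps)

lemma csc_neg: "csc c (- A) = - csc c A"
  by (simp add: csc_def vec_eq_iff)

lemma csc_negc: "csc (- c) A = - csc c A"
  by (simp add: csc_def vec_eq_iff)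

lemma csc_csc: "csc c (csc d A) = csc (c * d) A"
  by (simp add: csc_def vec_eq_iff mult.assoc)

lemma csc_minus_one: "csc (-1) A = - A"
  by (simp add: csc_def vec_eq_iff)

lemma csc_ii: "csc \<i> (csc \<i> A) = - A"
  by (simp add: csc_csc csc_minus_one)

text \<open>Normal form for multiplication by \<open>\<i>\<close>: pulled outward through sums and products.\<close>
lemmas csc_expand = csc_scaleR csc_mult_left csc_mult_right csc_add csc_diff csc_neg csc_csc csc_ii

lemma mpow_commute: "B ** S = S ** B \<Longrightarrow> B ** mpow S k = mpow S k ** (B::complex^'n^'n)"
  by (induction k) (simp_all, metis matrix_mul_assoc)

lemma mzpow_commute:
  assumes "invertible S" "B ** S = S ** B" shows "B ** mzpow S x = mzpow S x ** (B::complex^'n^'n)"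
proof -
  have "B ** matrix_inv S = matrix_inv S ** B" using matrix_inv_commute[OF assms(2)[symmetric] assms(1)] by simp
  then show ?thesis unfolding mzpow_def using mpow_commute assms(2) by auto
qed

lemma mzpow_succ:
  assumes i: "invertible (S::complex^'n^'n)" shows "mzpow S (x + 1) = S ** mzpow S x"
proof (cases "0 \<le> x")
  case True
  then have "nat (x + 1) = Suc (nat x)" by simp
  then show ?thesis using True by (simp add: mzpow_def)
next
  case False
  then have n: "nat (- x) = Suc (nat (- (x + 1)))" by simp
  show ?thesis
  proof (cases "x = -1")
    case True
    then show ?thesis by (simp add: mzpow_def matrix_inv_cancel[OF i])
  next
    case False
    with \<open>\<not> 0 \<le> x\<close> have "\<not> 0 \<le> x + 1" by simp
    then show ?thesis using \<open>\<not> 0 \<le> x\<close> by (simp add: mzpow_def n matrix_mul_assoc matrix_inv_cancel[OF i])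
  qed
qed

section \<open>The matrix exponential\<close>

text \<open>Square complex matrices with the operator norm form a real Banach algebra.  We make
  this available as a copy \<open>'n sqm\<close> of the matrix type, so that the library theory of
  \<open>exp\<close> in Banach algebras applies; \<open>mexp\<close> is then the exponential transported back.\<close>

lemma bounded_linear_matrix_vector_mult: "bounded_linear (\<lambda>v::complex^'n. (A::complex^'n^'m) *v v)"
proof -
  have "A *v (c *\<^sub>R v) = c *\<^sub>R (A *v v)" for c v
    by (simp add: vec_eq_iff matrix_vector_mult_def scaleR_sum_right)
  then show ?thesis
    unfolding linear_conv_bounded_linear[symmetric] by (intro linearI) (simp_all add: matrix_vector_right_distrib)
qed

typedef ('n::finite) sqm = "UNIV :: (complex^'n^'n) set" morphisms Rep_sqm Abs_sqm by simp

setup_lifting type_definition_sqm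

instantiation sqm :: (finite) real_normed_algebra_1
begin
lift_definition zero_sqm :: "'a sqm" is 0 .
lift_definition one_sqm :: "'a sqm" is "mat 1" .
lift_definition plus_sqm :: "'a sqm \<Rightarrow> 'a sqm \<Rightarrow> 'a sqm" is "(+)" .
lift_definition minus_sqm :: "'a sqm \<Rightarrow> 'a sqm \<Rightarrow> 'a sqm" is "(-)" .
lift_definition uminus_sqm :: "'a sqm \<Rightarrow> 'a sqm" is "uminus" .
lift_definition times_sqm :: "'a sqm \<Rightarrow> 'a sqm \<Rightarrow> 'a sqm" is "(**)" .
lift_definition scaleR_sqm :: "real \<Rightarrow> 'a sqm \<Rightarrow> 'a sqm" is "scaleR" .
lift_definition norm_sqm :: "'a sqm \<Rightarrow> real" is "\<lambda>A. onorm (\<lambda>v. A *v v)" .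
definition dist_sqm :: "'a sqm \<Rightarrow> 'a sqm \<Rightarrow> real" where "dist_sqm a b = norm (a - b)"
definition sgn_sqm :: "'a sqm \<Rightarrow> 'a sqm" where "sgn_sqm x = scaleR (inverse (norm x)) x"
definition uniformity_sqm :: "('a sqm \<times> 'a sqm) filter" where
  "uniformity_sqm = (INF e\<in>{0 <..}. principal {(x, y). dist x y < e})"
definition open_sqm :: "'a sqm set \<Rightarrow> bool"
  where "open_sqm S = (\<forall>x\<in>S. \<forall>\<^sub>F (x', y) in uniformity. x' = x \<longrightarrow> y \<in> S)"
instance
proof
  fix a b c :: "'a sqm" and r s :: real
  note bl = bounded_linear_matrix_vector_mult
  show "a * b * c = a * (b * c)" by transfer (simp add: matrix_mul_assoc)
  show "(a + b) * c = a * c + b * c" by transfer (simp add: matrix_add_rdistrib)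
  show "a * (b + c) = a * b + a * c" by transfer (simp add: matrix_add_ldistrib)
  show "1 * a = a" "a * 1 = a" by (transfer, simp)+
  show "(0::'a sqm) \<noteq> 1" by transfer (simp add: vec_eq_iff mat_def)
  show "a + b + c = a + (b + c)" "a + b = b + a" "0 + a = a" "- a + a = 0" "a - b = a + - b"
    by (transfer, simp)+
  show "r *\<^sub>R (a + b) = r *\<^sub>R a + r *\<^sub>R b" by transfer (simp add: scaleR_add_right)
  show "(r + s) *\<^sub>R a = r *\<^sub>R a + s *\<^sub>R a" by transfer (simp add: scaleR_add_left)
  show "r *\<^sub>R s *\<^sub>R a = (r * s) *\<^sub>R a" "1 *\<^sub>R a = a" by (transfer, simp)+
  show "r *\<^sub>R a * b = r *\<^sub>R (a * b)" by transfer (simp add: matrix_mul_scaleR_left)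
  show "a * r *\<^sub>R b = r *\<^sub>R (a * b)" by transfer (simp add: matrix_mul_scaleR_right)
  show "dist a b = norm (a - b)" by (simp add: dist_sqm_def)
  show "sgn a = inverse (norm a) *\<^sub>R a" by (simp add: sgn_sqm_def)
  show "uniformity = (INF e\<in>{0<..}. principal {(x, y::'a sqm). dist x y < e})"
    by (simp add: uniformity_sqm_def)
  show "open U = (\<forall>x\<in>U. \<forall>\<^sub>F (x', y) in uniformity. x' = x \<longrightarrow> y \<in> U)" for U :: "'a sqm set"
    by (simp add: open_sqm_def)
  show "(norm a = 0) = (a = 0)"
    by transfer (subst onorm_eq_0[OF bl], metis matrix_eq matrix_vector_mult_0)
  show "norm (a + b) \<le> norm a + norm b"
  proof transfer
    fix a b :: "complex^'a^'a"
    have "(\<lambda>v. (a + b) *v v) = (\<lambda>v. a *v v + b *v v)" by (simp add: matrix_vector_mult_add_rdistrib)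
    then show "onorm (\<lambda>v. (a + b) *v v) \<le> onorm (\<lambda>v. a *v v) + onorm (\<lambda>v. b *v v)"
      using onorm_triangle[OF bl[of a] bl[of b]] by simp
  qed
  show "norm (r *\<^sub>R a) = \<bar>r\<bar> * norm a"
  proof transfer
    fix r :: real and a :: "complex^'a^'a"
    have "(\<lambda>v. (r *\<^sub>R a) *v v) = (\<lambda>v. r *\<^sub>R (a *v v))"
      by (rule ext) (simp add: matrix_vector_mult_def vec_eq_iff scaleR_sum_right)
    then show "onorm (\<lambda>v. (r *\<^sub>R a) *v v) = \<bar>r\<bar> * onorm (\<lambda>v. a *v v)"
      using onorm_scaleR[OF bl[of a]] by simp
  qed
  show "norm (a * b) \<le> norm a * norm b"
  proof transfer
    fix a b :: "complex^'a^'a"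
    have "(\<lambda>v. (a ** b) *v v) = (\<lambda>v. a *v v) o (\<lambda>v. b *v v)" by (simp add: o_def matrix_vector_mul_assoc)
    then show "onorm (\<lambda>v. (a ** b) *v v) \<le> onorm (\<lambda>v. a *v v) * onorm (\<lambda>v. b *v v)"
      using onorm_compose[OF bl[of a] bl[of b]] by metis
  qed
  show "norm (1::'a sqm) = 1" by transfer (simp add: onorm_id)
qed
end

text \<open>The operator norm and the Euclidean norm of the entries are equivalent, with
  constant \<open>n\<^sup>2\<close>; this gives completeness and continuity of the representation.\<close>

lemma norm_vec_le_sum: "norm (x::'a::real_normed_vector^'n) \<le> (\<Sum>i\<in>UNIV. norm (x $ i))"
  by (simp add: norm_vec_def L2_set_le_sum)

lemma entry_le_norm_sqm: "norm (Rep_sqm A $ i $ j) \<le> norm A"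
proof -
  have ax: "(Rep_sqm A *v axis j 1) $ i = Rep_sqm A $ i $ j"
    by (simp add: matrix_vector_mult_def axis_def if_distrib cong: if_cong)
  have "norm (axis j (1::complex)) \<le> (\<Sum>k\<in>UNIV. norm (axis j (1::complex) $ k))" by (rule norm_vec_le_sum)
  also have "\<dots> = 1" by (simp add: axis_def if_distrib cong: if_cong)
  finally have n1: "norm (axis j (1::complex)) \<le> 1" .
  have "norm (Rep_sqm A $ i $ j) \<le> norm (Rep_sqm A *v axis j 1)"
    unfolding ax[symmetric] by (rule Finite_Cartesian_Product.norm_nth_le)
  also have "\<dots> \<le> norm A * norm (axis j (1::complex))"
    unfolding norm_sqm.rep_eq by (rule onorm[OF bounded_linear_matrix_vector_mult])
  also have "\<dots> \<le> norm A" using mult_left_mono[OF n1 norm_ge_zero[of A]] by simp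
  finally show ?thesis .
qed

lemma norm_Rep_sqm_le: "norm (Rep_sqm (A::'n::finite sqm)) \<le> of_nat (CARD('n) * CARD('n)) * norm A"
proof -
  have "norm (Rep_sqm A) \<le> (\<Sum>i\<in>UNIV. norm (Rep_sqm A $ i))" by (rule norm_vec_le_sum)
  also have "\<dots> \<le> (\<Sum>i\<in>(UNIV::'n set). \<Sum>j\<in>(UNIV::'n set). norm (Rep_sqm A $ i $ j))"
    by (rule sum_mono) (rule norm_vec_le_sum)
  also have "\<dots> \<le> (\<Sum>i\<in>(UNIV::'n set). \<Sum>j\<in>(UNIV::'n set). norm A)"
    by (intro sum_mono entry_le_norm_sqm)
  finally show ?thesis by simp
qed

lemma norm_sqm_le_Rep: "norm (A::'n::finite sqm) \<le> of_nat (CARD('n) * CARD('n)) * norm (Rep_sqm A)"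
  unfolding norm_sqm.rep_eq
proof (rule onorm_bound)
  show "0 \<le> of_nat (CARD('n) * CARD('n)) * norm (Rep_sqm A)" by simp
  fix v :: "complex^'n"
  have entry: "norm (Rep_sqm A $ i $ j * v $ j) \<le> norm (Rep_sqm A) * norm v" for i j
  proof -
    have "norm (Rep_sqm A $ i $ j) \<le> norm (Rep_sqm A)"
      by (metis Finite_Cartesian_Product.norm_nth_le order_trans)
    moreover have "norm (v $ j) \<le> norm v" by (rule Finite_Cartesian_Product.norm_nth_le)
    ultimately show ?thesis by (simp add: norm_mult mult_mono)
  qed
  have "norm (Rep_sqm A *v v) \<le> (\<Sum>i\<in>UNIV. norm ((Rep_sqm A *v v) $ i))" by (rule norm_vec_le_sum)
  also have "\<dots> \<le> (\<Sum>i\<in>UNIV. \<Sum>j\<in>UNIV. norm (Rep_sqm A $ i $ j * v $ j))"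
    unfolding matrix_vector_mult_def by (intro sum_mono) (simp add: norm_sum)
  also have "\<dots> \<le> (\<Sum>i\<in>(UNIV::'n set). \<Sum>j\<in>(UNIV::'n set). norm (Rep_sqm A) * norm v)"
    by (intro sum_mono entry)
  finally show "norm (Rep_sqm A *v v) \<le> of_nat (CARD('n) * CARD('n)) * norm (Rep_sqm A) * norm v"
    by simp
qed

lemma Rep_sqm_diff: "Rep_sqm (a - b) = Rep_sqm a - Rep_sqm b" by transfer simp
lemma Rep_sqm_add: "Rep_sqm (a + b) = Rep_sqm a + Rep_sqm b" by transfer simp
lemma Rep_sqm_scaleR: "Rep_sqm (r *\<^sub>R a) = r *\<^sub>R Rep_sqm a" by transfer simp
lemma Rep_sqm_mult: "Rep_sqm (a * b) = Rep_sqm a ** Rep_sqm b" by transfer simp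
lemma Rep_sqm_one: "Rep_sqm 1 = mat 1" by transfer simp

lemma Abs_sqm_add: "Abs_sqm (A + B) = Abs_sqm A + Abs_sqm B"
  by (metis Rep_sqm_add Rep_sqm_inverse Abs_sqm_inverse UNIV_I)
lemma Abs_sqm_scaleR: "Abs_sqm (r *\<^sub>R A) = r *\<^sub>R Abs_sqm A"
  by (metis Rep_sqm_scaleR Rep_sqm_inverse Abs_sqm_inverse UNIV_I)
lemma Abs_sqm_mult: "Abs_sqm (A ** B) = Abs_sqm A * Abs_sqm B"
  by (metis Rep_sqm_mult Rep_sqm_inverse Abs_sqm_inverse UNIV_I)
lemma Abs_sqm_uminus: "Abs_sqm (- A) = - Abs_sqm A"
  by (metis Abs_sqm_scaleR scaleR_minus1_left)

lemma bounded_linear_Rep_sqm: "bounded_linear Rep_sqm"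
proof
  show "Rep_sqm (a + b) = Rep_sqm a + Rep_sqm b" for a b :: "'a sqm" by (rule Rep_sqm_add)
  show "Rep_sqm (r *\<^sub>R b) = r *\<^sub>R Rep_sqm b" for r and b :: "'a sqm" by (rule Rep_sqm_scaleR)
  show "\<exists>K. \<forall>x::'a sqm. norm (Rep_sqm x) \<le> norm x * K"
    by (rule exI[of _ "of_nat (CARD('a) * CARD('a))"]) (metis norm_Rep_sqm_le mult.commute)
qed

instance sqm :: (finite) banach
proof
  fix X :: "nat \<Rightarrow> 'a sqm"
  assume "Cauchy X"
  define C where "C = (of_nat (CARD('a) * CARD('a)) :: real)"
  have C: "C > 0" by (simp add: C_def)
  have "Cauchy (\<lambda>n. Rep_sqm (X n))"
    using bounded_linear.Cauchy[OF bounded_linear_Rep_sqm \<open>Cauchy X\<close>] .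
  then obtain L where L: "(\<lambda>n. Rep_sqm (X n)) \<longlonglongrightarrow> L"
    using Cauchy_convergent_iff convergent_def by blast
  have "(\<lambda>n. X n - Abs_sqm L) \<longlonglongrightarrow> 0"
  proof (rule Lim_null_comparison)
    show "\<forall>\<^sub>F n in sequentially. norm (X n - Abs_sqm L) \<le> C * norm (Rep_sqm (X n) - L)"
      using norm_sqm_le_Rep[of "X _ - Abs_sqm L"] by (simp add: C_def Rep_sqm_diff Abs_sqm_inverse)
    show "(\<lambda>n. C * norm (Rep_sqm (X n) - L)) \<longlonglongrightarrow> 0"
      using L by (intro tendsto_mult_right_zero) (simp add: LIM_zero_iff tendsto_norm_zero)
  qed
  then have "X \<longlonglongrightarrow> Abs_sqm L" by (simp add: LIM_zero_iff)
  then show "convergent X" by (auto simp: convergent_def)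
qed

lemma mexp_eq_Rep_exp: "mexp A = Rep_sqm (exp (Abs_sqm A))"
proof -
  have pow: "Rep_sqm (x ^ k) = mpow (Rep_sqm x) k" for x :: "'a sqm" and k
    by (induction k) (simp_all add: Rep_sqm_one Rep_sqm_mult)
  have "(\<lambda>k. Rep_sqm ((Abs_sqm A)^k /\<^sub>R fact k)) sums Rep_sqm (exp (Abs_sqm A))"
    by (rule bounded_linear.sums[OF bounded_linear_Rep_sqm exp_converges])
  moreover have "(\<lambda>k. Rep_sqm ((Abs_sqm A)^k /\<^sub>R fact k)) = (\<lambda>k. (1 / fact k) *\<^sub>R mpow A k)"
    by (rule ext) (simp add: Rep_sqm_scaleR pow Abs_sqm_inverse divide_inverse)
  ultimately show ?thesis unfolding mexp_def by (simp add: sums_iff)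
qed

lemma mexp_commute:
  assumes "B ** M = M ** (B::complex^'n^'n)" shows "B ** mexp M = mexp M ** B"
proof -
  let ?b = "Abs_sqm B" and ?m = "Abs_sqm M"
  have c: "?b * ?m = ?m * ?b" using assms by (simp flip: Abs_sqm_mult)
  have pow: "?b * ?m ^ k = ?m ^ k * ?b" for k
    by (induction k) (simp_all, metis c mult.assoc)
  have s: "summable (\<lambda>k. ?m^k /\<^sub>R fact k)" by (rule summable_exp_generic)
  have "?b * exp ?m = (\<Sum>k. ?b * (?m^k /\<^sub>R fact k))" unfolding exp_def by (rule suminf_mult[OF s, symmetric])
  also have "\<dots> = (\<Sum>k. (?m^k /\<^sub>R fact k) * ?b)" using pow by (simp add: mult_scaleR_right mult_scaleR_left)
  also have "\<dots> = exp ?m * ?b" unfolding exp_def by (rule suminf_mult2[OF s, symmetric])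
  finally show ?thesis
    by (metis Rep_sqm_mult mexp_eq_Rep_exp Abs_sqm_inverse UNIV_I)
qed

lemma mexp_mult_mexp_neg: "mexp M ** mexp (- M) = mat 1"
proof -
  have "exp (Abs_sqm M) * exp (- Abs_sqm M) = 1" by (simp flip: exp_add_commuting)
  then have "Rep_sqm (exp (Abs_sqm M) * exp (- Abs_sqm M)) = mat 1" by (simp add: Rep_sqm_one)
  then show ?thesis by (simp add: Rep_sqm_mult mexp_eq_Rep_exp Abs_sqm_uminus)
qed

lemma invertible_mexp: "invertible (mexp (M::complex^'n^'n))"
  using mexp_mult_mexp_neg invertible_right_inverse by blast

lemma has_vector_derivative_mexp:
  assumes "M ** N = N ** (M::complex^'n^'n)"
  shows "((\<lambda>s. mexp (M + s *\<^sub>R N)) has_vector_derivative N ** mexp (M + s *\<^sub>R N)) (at s within X)"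
proof -
  let ?m = "Abs_sqm M" and ?n = "Abs_sqm N"
  have c: "(s' *\<^sub>R ?n) * ?m = ?m * (s' *\<^sub>R ?n)" for s'
    using assms by (simp flip: Abs_sqm_mult)
  have e: "mexp (M + s' *\<^sub>R N) = Rep_sqm (exp (s' *\<^sub>R ?n) * exp ?m)" for s'
    by (simp add: mexp_eq_Rep_exp Abs_sqm_add Abs_sqm_scaleR exp_add_commuting[OF c, symmetric] add.commute)
  have "((\<lambda>s. exp (s *\<^sub>R ?n) * exp ?m) has_vector_derivative (?n * exp (s *\<^sub>R ?n)) * exp ?m) (at s within X)"
    by (rule has_vector_derivative_mult_left[OF has_vector_derivative_at_within[OF exp_scaleR_has_vector_derivative_left]])
  then have "((\<lambda>s. Rep_sqm (exp (s *\<^sub>R ?n) * exp ?m)) has_vector_derivative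
      Rep_sqm ((?n * exp (s *\<^sub>R ?n)) * exp ?m)) (at s within X)"
    by (rule bounded_linear.has_vector_derivative[OF bounded_linear_Rep_sqm])
  moreover have "Rep_sqm ((?n * exp (s *\<^sub>R ?n)) * exp ?m) = N ** mexp (M + s *\<^sub>R N)"
    by (simp add: e Rep_sqm_mult Abs_sqm_inverse mult.assoc)
  ultimately show ?thesis by (simp add: e)
qed

section \<open>Calculus of matrix-valued functions\<close>

lemma has_vector_derivative_matrix_mul:
  assumes "(f has_vector_derivative f') (at x within s)" "(g has_vector_derivative g') (at x within s)"
  shows "((\<lambda>x. (f x :: complex^'n^'m) ** (g x :: complex^'p^'n)) has_vector_derivative
      (f x ** g' + f' ** g x)) (at x within s)"
  by (rule bounded_bilinear.has_vector_derivative[OF bounded_bilinear_matrix_mul assms])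

lemma has_vector_derivative_mul_const_left:
  "(f has_vector_derivative f') F \<Longrightarrow>
    ((\<lambda>x. (C::complex^'n^'m) ** (f x :: complex^'p^'n)) has_vector_derivative C ** f') F"
  by (rule bounded_linear.has_vector_derivative[OF bounded_bilinear.bounded_linear_right[OF bounded_bilinear_matrix_mul]])

lemma has_vector_derivative_mul_const_right:
  "(f has_vector_derivative f') F \<Longrightarrow>
    ((\<lambda>x. (f x :: complex^'n^'m) ** (C::complex^'p^'n)) has_vector_derivative f' ** C) F"
  by (rule bounded_linear.has_vector_derivative[OF bounded_bilinear.bounded_linear_left[OF bounded_bilinear_matrix_mul]])

lemma has_vector_derivative_scaleR_const:
  "(f has_vector_derivative f') F \<Longrightarrow>
    ((\<lambda>x. c *\<^sub>R (f x :: 'a::real_normed_vector)) has_vector_derivative c *\<^sub>R f') F"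
  by (rule bounded_linear.has_vector_derivative[OF bounded_linear_scaleR_right])

lemma has_vector_derivative_mconj:
  "(f has_vector_derivative f') F \<Longrightarrow>
    ((\<lambda>x. mconj (f x :: complex^'n^'m)) has_vector_derivative mconj f') F"
  by (rule bounded_linear.has_vector_derivative[OF bounded_linear_mconj])

lemmas has_vector_derivative_matrix_rules = has_vector_derivative_mul_const_left
  has_vector_derivative_mul_const_right has_vector_derivative_scaleR_const

lemma continuous_det: "continuous_on UNIV (det :: complex^'n^'n \<Rightarrow> complex)"
  unfolding det_def[abs_def] by (intro continuous_intros)

lemma open_det_nonzero: "open {A::complex^'n^'n. det A \<noteq> 0}"
  using open_vimage[OF open_UNIV[THEN open_Diff[OF _ closed_singleton], of 0] continuous_det]
  by (simp add: vimage_def Collect_neg_eq[symmetric] set_diff_eq)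

lemma matrix_inv_cramer:
  fixes A :: "complex^'n^'n" assumes "det A \<noteq> 0"
  shows "matrix_inv A = (\<chi> k j. det (\<chi> i l. if l = k then axis j 1 $ i else A$i$l) / det A)"
proof -
  have i: "invertible A" using assms invertible_det_nz by blast
  have col: "(M *v axis j 1) $ k = M $ k $ j" for M :: "complex^'n^'n" and j k
    by (simp add: matrix_vector_mult_def axis_def if_distrib cong: if_cong)
  show ?thesis
  proof (subst vec_eq_iff, intro allI, subst vec_eq_iff, intro allI)
    fix k j
    have "A *v (matrix_inv A *v axis j 1) = axis j 1"
      by (simp add: matrix_vector_mul_assoc matrix_inv_right[OF i])
    then have "matrix_inv A *v axis j 1 = (\<chi> k. det (\<chi> i l. if l = k then axis j 1 $ i else A$i$l) / det A)"
      using cramer[OF assms] by blast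
    then show "matrix_inv A $ k $ j = (\<chi> k j. det (\<chi> i l. if l = k then axis j 1 $ i else A$i$l) / det A) $ k $ j"
      by (simp add: col[symmetric])
  qed
qed

lemma isCont_matrix_inv:
  fixes A :: "complex^'n^'n" assumes "invertible A" shows "isCont matrix_inv A"
proof -
  let ?S = "{A::complex^'n^'n. det A \<noteq> 0}"
  let ?g = "\<lambda>A::complex^'n^'n. (\<chi> k j. det (\<chi> i l. if l = k then axis j 1 $ i else A$i$l) / det A)"
  have det_comp: "continuous_on UNIV (\<lambda>x. det (f x :: complex^'n^'n))" if "continuous_on UNIV f" for f
    using continuous_on_compose2[OF continuous_det that] by blast
  have "continuous_on ?S ?g"
    apply (intro continuous_intros continuous_on_subset[OF det_comp] continuous_det[THEN continuous_on_subset])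
    subgoal for k j i l by (cases "l = k") (auto intro!: continuous_intros)
    by auto
  then have "continuous_on ?S matrix_inv"
    by (rule continuous_on_eq) (simp add: matrix_inv_cramer)
  moreover have "A \<in> ?S" using assms invertible_det_nz by blast
  ultimately show ?thesis using open_det_nonzero continuous_on_eq_continuous_at by blast
qed

lemma eventually_invertible:
  fixes F :: "real \<Rightarrow> complex^'n^'n"
  assumes "isCont F s" "invertible (F s)"
  shows "\<forall>\<^sub>F y in nhds s. invertible (F y)"
proof -
  have "\<forall>\<^sub>F y in nhds s. F y \<in> {A. det A \<noteq> 0}"
    using assms(1)[unfolded isCont_def] assms(2) invertible_det_nz
    by (intro topological_tendstoD) (auto simp: tendsto_at_iff_tendsto_nhds open_det_nonzero)
  then show ?thesis by (rule eventually_mono) (simp add: invertible_det_nz)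
qed

lemma has_vector_derivative_iff_quotient:
  fixes f :: "real \<Rightarrow> 'a::real_normed_vector"
  shows "(f has_vector_derivative f') (at s) \<longleftrightarrow> ((\<lambda>y. (f y - f s) /\<^sub>R (y - s)) \<longlongrightarrow> f') (at s)"
proof -
  have eq: "\<forall>\<^sub>F y in at s. norm ((f y - f s) /\<^sub>R (y - s) - f')
      = norm ((f y - f s - (y - s) *\<^sub>R f') /\<^sub>R norm (y - s))"
  proof (rule eventually_at_filter[THEN iffD2, OF always_eventually], intro allI impI)
    fix y assume "y \<noteq> s"
    then have "(f y - f s) /\<^sub>R (y - s) - f' = inverse (y - s) *\<^sub>R (f y - f s - (y - s) *\<^sub>R f')"
      by (simp add: scaleR_diff_right)
    then show "norm ((f y - f s) /\<^sub>R (y - s) - f') = norm ((f y - f s - (y - s) *\<^sub>R f') /\<^sub>R norm (y - s))"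
      by simp
  qed
  have "(f has_vector_derivative f') (at s) \<longleftrightarrow>
      ((\<lambda>y. norm ((f y - f s - (y - s) *\<^sub>R f') /\<^sub>R norm (y - s))) \<longlongrightarrow> 0) (at s)"
    unfolding has_vector_derivative_def has_derivative_at_within tendsto_norm_zero_iff
    by (simp add: bounded_linear_scaleR_left)
  also have "\<dots> \<longleftrightarrow> ((\<lambda>y. norm ((f y - f s) /\<^sub>R (y - s) - f')) \<longlongrightarrow> 0) (at s)"
    by (rule tendsto_cong, rule eventually_mono[OF eq]) simp
  also have "\<dots> \<longleftrightarrow> ((\<lambda>y. (f y - f s) /\<^sub>R (y - s)) \<longlongrightarrow> f') (at s)"
    by (simp add: LIM_zero_iff tendsto_norm_zero_iff)
  finally show ?thesis .
qed

text \<open>\<open>(F\<^sup>-\<^sup>1)' = - F\<^sup>-\<^sup>1 F' F\<^sup>-\<^sup>1\<close>, from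
  \<open>F(y)\<^sup>-\<^sup>1 - F(s)\<^sup>-\<^sup>1 = - F(y)\<^sup>-\<^sup>1 (F(y) - F(s)) F(s)\<^sup>-\<^sup>1\<close> and continuity of the inverse.\<close>
lemma has_vector_derivative_matrix_inv:
  fixes F :: "real \<Rightarrow> complex^'n^'n"
  assumes d: "(F has_vector_derivative F') (at s)" and i: "invertible (F s)"
  shows "((\<lambda>y. matrix_inv (F y)) has_vector_derivative
      - (matrix_inv (F s) ** F' ** matrix_inv (F s))) (at s)"
  unfolding has_vector_derivative_iff_quotient
proof -
  let ?G = "\<lambda>y. matrix_inv (F y)"
  have cF: "isCont F s" using d has_vector_derivative_continuous by blast
  have cG: "isCont ?G s" using continuous_at_compose[OF cF isCont_matrix_inv[OF i]] by (simp add: o_def)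
  have quot: "((\<lambda>y. (F y - F s) /\<^sub>R (y - s)) \<longlongrightarrow> F') (at s)"
    using d has_vector_derivative_iff_quotient by blast
  have difference: "?G y - ?G s = - (?G y ** (F y - F s) ** ?G s)" if iy: "invertible (F y)" for y
    by (simp add: matrix_expand matrix_inv_cancel[OF iy] matrix_inv_cancel[OF i])
  have "((\<lambda>y. - (?G y ** ((F y - F s) /\<^sub>R (y - s)) ** ?G s)) \<longlongrightarrow> - (?G s ** F' ** ?G s)) (at s)"
    using bounded_bilinear.tendsto[OF bounded_bilinear_matrix_mul
        bounded_bilinear.tendsto[OF bounded_bilinear_matrix_mul cG[unfolded isCont_def] quot] tendsto_const]
    by (rule tendsto_minus)
  moreover have "\<forall>\<^sub>F y in at s. - (?G y ** ((F y - F s) /\<^sub>R (y - s)) ** ?G s) = (?G y - ?G s) /\<^sub>R (y - s)"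
    using eventually_invertible[OF cF i]
    by (auto simp: eventually_at_filter difference matrix_mul_scaleR_left matrix_mul_scaleR_right
        elim!: eventually_mono)
  ultimately show "((\<lambda>y. (?G y - ?G s) /\<^sub>R (y - s)) \<longlongrightarrow> - (?G s ** F' ** ?G s)) (at s)"
    by (rule tendsto_cong[THEN iffD1, rotated])
qed

section \<open>Resolvent algebra of the solution formulas\<close>

lemma intertwine_inverse:
  fixes A B X Y :: "complex^'n^'n"
  assumes "invertible A" "invertible B" "A ** X = Y ** B"
  shows "X ** matrix_inv B = matrix_inv A ** Y"
  by (metis assms matrix_inv_cancel(1,4) matrix_mul_assoc matrix_mul_rid)

definition qden :: "real \<Rightarrow> complex^'n^'n \<Rightarrow> complex^'n^'n \<Rightarrow> complex^'n^'n" where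
  "qden \<epsilon> K Xi = matrix_inv (mconj Xi) - \<epsilon> *\<^sub>R (mconj K ** (Xi ** K))"

definition pden :: "real \<Rightarrow> complex^'n^'n \<Rightarrow> complex^'n^'n \<Rightarrow> complex^'n^'n" where
  "pden \<epsilon> K Xi = matrix_inv Xi - \<epsilon> *\<^sub>R (K ** (mconj Xi ** mconj K))"

abbreviation qres :: "real \<Rightarrow> complex^'n^'n \<Rightarrow> complex^'n^'n \<Rightarrow> complex^'n^'n" where
  "qres \<epsilon> K Xi \<equiv> matrix_inv (qden \<epsilon> K Xi)"

abbreviation pres :: "real \<Rightarrow> complex^'n^'n \<Rightarrow> complex^'n^'n \<Rightarrow> complex^'n^'n" where
  "pres \<epsilon> K Xi \<equiv> matrix_inv (pden \<epsilon> K Xi)"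

lemma inv_ok_invertible:
  assumes "inv_ok \<epsilon> K Xi"
  shows "invertible Xi" "invertible (mconj Xi)" "invertible (qden \<epsilon> K Xi)" "invertible (pden \<epsilon> K Xi)"
  using assms by (auto simp: inv_ok_def qden_def pden_def matrix_mul_assoc)

lemma mconj_qden: "invertible Xi \<Longrightarrow> mconj (qden \<epsilon> K Xi) = pden \<epsilon> K Xi"
  by (simp add: qden_def pden_def mconj_distrib mconj_matrix_inv invertible_mconj)

lemma mconj_qres: "inv_ok \<epsilon> K Xi \<Longrightarrow> mconj (qres \<epsilon> K Xi) = pres \<epsilon> K Xi"
  by (simp add: mconj_matrix_inv inv_ok_invertible mconj_qden)

lemma mconj_pres: "inv_ok \<epsilon> K Xi \<Longrightarrow> mconj (pres \<epsilon> K Xi) = qres \<epsilon> K Xi"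
  by (metis mconj_qres mconj_mconj)

text \<open>Push-through identity: \<open>\<Xi>\<^sup>* K\<^sup>* Q = R K\<^sup>* \<Xi>\<close>, from \<open>A (\<Xi>\<^sup>* K\<^sup>*) = K\<^sup>* \<Xi> B\<close>.\<close>
lemma push_through:
  assumes ok: "inv_ok \<epsilon> K Xi"
  shows "mconj Xi ** (mconj K ** pres \<epsilon> K Xi) = qres \<epsilon> K Xi ** (mconj K ** Xi)"
proof -
  note i = inv_ok_invertible[OF ok]
  have "qden \<epsilon> K Xi ** (mconj Xi ** mconj K) = (mconj K ** Xi) ** pden \<epsilon> K Xi"
    by (simp add: qden_def pden_def matrix_expand matrix_inv_cancel[OF i(1)] matrix_inv_cancel[OF i(2)])
  from intertwine_inverse[OF i(3,4) this] show ?thesis by (simp add: matrix_mul_assoc)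
qed

lemma push_through_conj:
  assumes ok: "inv_ok \<epsilon> K Xi"
  shows "pres \<epsilon> K Xi ** (K ** mconj Xi) = Xi ** (K ** qres \<epsilon> K Xi)"
  using arg_cong[OF push_through[OF ok], of mconj]
  by (simp add: mconj_mult mconj_qres[OF ok] mconj_pres[OF ok] mconj_mconj)

lemma qsol_eq: "qsol \<sigma> \<epsilon> U V K Xi = \<sigma> *\<^sub>R (U ** (qres \<epsilon> K Xi ** mconj V))"
  by (simp add: qsol_def qden_def matrix_mul_assoc)

lemma psol_eq:
  assumes ok: "inv_ok \<epsilon> K Xi"
  shows "psol \<epsilon> U V K Xi = \<epsilon> *\<^sub>R (U ** (qres \<epsilon> K Xi ** (mconj K ** (Xi ** V))))"
proof -
  have "psol \<epsilon> U V K Xi = \<epsilon> *\<^sub>R (U ** (mconj Xi ** (mconj K ** pres \<epsilon> K Xi)) ** V)"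
    by (simp add: psol_def pden_def matrix_mul_assoc)
  also have "\<dots> = \<epsilon> *\<^sub>R (U ** (qres \<epsilon> K Xi ** (mconj K ** Xi)) ** V)"
    by (simp only: push_through[OF ok])
  finally show ?thesis by (simp add: matrix_mul_assoc)
qed

lemma mconj_qsol:
  "inv_ok \<epsilon> K Xi \<Longrightarrow> mconj (qsol \<sigma> \<epsilon> U V K Xi) = \<sigma> *\<^sub>R (mconj U ** (pres \<epsilon> K Xi ** V))"
  by (simp add: qsol_eq mconj_distrib mconj_qres)

lemma mconj_psol:
  assumes ok: "inv_ok \<epsilon> K Xi"
  shows "mconj (psol \<epsilon> U V K Xi) = \<epsilon> *\<^sub>R (mconj U ** (Xi ** (K ** (qres \<epsilon> K Xi ** mconj V))))"
proof -
  have "mconj (psol \<epsilon> U V K Xi) = \<epsilon> *\<^sub>R (mconj U ** (pres \<epsilon> K Xi ** (K ** mconj Xi)) ** mconj V)"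
    by (simp add: psol_eq[OF ok] mconj_distrib mconj_qres[OF ok] matrix_mul_assoc)
  also have "\<dots> = \<epsilon> *\<^sub>R (mconj U ** (Xi ** (K ** qres \<epsilon> K Xi)) ** mconj V)"
    by (simp only: push_through_conj[OF ok])
  finally show ?thesis by (simp add: matrix_mul_assoc)
qed

lemma pres_expand:
  assumes ok: "inv_ok \<epsilon> K Xi"
  shows "pres \<epsilon> K Xi = Xi + \<epsilon> *\<^sub>R (Xi ** (K ** (qres \<epsilon> K Xi ** (mconj K ** Xi))))"
proof -
  note i = inv_ok_invertible[OF ok]
  have "Xi ** (pden \<epsilon> K Xi ** pres \<epsilon> K Xi) = Xi" by (simp add: matrix_inv_cancel[OF i(4)])
  then have "pres \<epsilon> K Xi - \<epsilon> *\<^sub>R (Xi ** (K ** (mconj Xi ** (mconj K ** pres \<epsilon> K Xi)))) = Xi"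
    unfolding pden_def by (simp add: matrix_expand matrix_inv_cancel[OF i(1)])
  then show ?thesis by (simp add: push_through[OF ok] algebra_simps)
qed

section \<open>Discrete shifts \<open>\<Xi> \<mapsto> S \<Xi>\<close>\<close>

lemma commute_inverses:
  fixes A B :: "complex^'n^'n"
  assumes c: "A ** B = B ** A" and iA: "invertible A" and iB: "invertible B"
  shows "matrix_inv A ** B = B ** matrix_inv A" "A ** matrix_inv B = matrix_inv B ** A"
    "matrix_inv A ** matrix_inv B = matrix_inv B ** matrix_inv A"
  using matrix_inv_commute[OF c iA] matrix_inv_commute[OF c[symmetric] iB]
    matrix_inv_commute[OF matrix_inv_commute[OF c iA, symmetric] iB]
  by simp_all

text \<open>The discrete Sylvester equation \<open>S\<^sup>-\<^sup>1 K - K S\<^sup>* = V U\<close> and its conjugate, as rewrite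
  rules (also in the right-nested form produced by the expansion rules).\<close>
lemma sylvester_discrete_rules:
  fixes S K :: "complex^'n^'n" and U :: "complex^'n^'m" and V :: "complex^'m^'n"
  assumes iS: "invertible S" and Sy: "matrix_inv S ** K - K ** mconj S = V ** U"
  shows "matrix_inv S ** K = V ** U + K ** mconj S"
    "\<And>Z::complex^'p^'n. matrix_inv S ** (K ** Z) = V ** (U ** Z) + K ** (mconj S ** Z)"
    "matrix_inv (mconj S) ** mconj K = mconj V ** mconj U + mconj K ** S"
    "\<And>Z::complex^'p^'n. matrix_inv (mconj S) ** (mconj K ** Z) = mconj V ** (mconj U ** Z) + mconj K ** (S ** Z)"
proof -
  show S1: "matrix_inv S ** K = V ** U + K ** mconj S" using Sy by (metis diff_eq_eq)
  have "mconj (matrix_inv S ** K - K ** mconj S) = mconj (V ** U)" using Sy by simp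
  then have "matrix_inv (mconj S) ** mconj K - mconj K ** S = mconj V ** mconj U"
    by (simp add: mconj_distrib mconj_matrix_inv[OF iS])
  then show S2: "matrix_inv (mconj S) ** mconj K = mconj V ** mconj U + mconj K ** S"
    by (metis diff_eq_eq)
  show "matrix_inv S ** (K ** Z) = V ** (U ** Z) + K ** (mconj S ** Z)" for Z :: "complex^'p^'n"
    by (simp add: matrix_mul_assoc S1 matrix_add_rdistrib)
  show "matrix_inv (mconj S) ** (mconj K ** Z) = mconj V ** (mconj U ** Z) + mconj K ** (S ** Z)"
    for Z :: "complex^'p^'n"
    by (simp add: matrix_mul_assoc S2 matrix_add_rdistrib)
qed

lemma qden_shift:
  fixes S Xi :: "complex^'n^'n"
  assumes "invertible S" "inv_ok \<epsilon> K Xi"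
  shows "qden \<epsilon> K (S ** Xi) = matrix_inv (mconj Xi) ** matrix_inv (mconj S)
           - \<epsilon> *\<^sub>R (mconj K ** (S ** (Xi ** K)))"
  by (simp add: qden_def mconj_mult matrix_inv_mult[OF invertible_mconj[OF assms(1)]
      inv_ok_invertible(2)[OF assms(2)]] matrix_mul_assoc)

text \<open>Resolvent identity behind \<open>p(x+1) - p(x) = -\<epsilon> q(x+1) q(x)\<^sup>*\<close>:
  \<open>R(S\<Xi>) K\<^sup>* S\<Xi> - R(\<Xi>) K\<^sup>* \<Xi> = - R(S\<Xi>) V\<^sup>* U\<^sup>* Q(\<Xi>)\<close>.\<close>
lemma shift_resolvent_p:
  fixes S K Xi :: "complex^'n^'n" and U :: "complex^'n^'m" and V :: "complex^'m^'n"
  assumes iS: "invertible S" and Sy: "matrix_inv S ** K - K ** mconj S = V ** U"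
    and cm: "S ** Xi = Xi ** S" and ok0: "inv_ok \<epsilon> K Xi" and ok1: "inv_ok \<epsilon> K (S ** Xi)"
  shows "qres \<epsilon> K (S ** Xi) ** (mconj K ** (S ** Xi)) - qres \<epsilon> K Xi ** (mconj K ** Xi)
       = - (qres \<epsilon> K (S ** Xi) ** (mconj V ** (mconj U ** pres \<epsilon> K Xi)))"
proof -
  note i0 = inv_ok_invertible[OF ok0] and i1 = inv_ok_invertible[OF ok1]
  define A1 where "A1 = qden \<epsilon> K (S ** Xi)"
  define B where "B = pden \<epsilon> K Xi"
  have c: "matrix_inv (mconj S) ** (mconj Xi ** Z) = mconj Xi ** (matrix_inv (mconj S) ** Z)"
    for Z :: "complex^'p^'n"
    using commute_inverses(1)[OF arg_cong[OF cm, of mconj, unfolded mconj_mult] invertible_mconj[OF iS] i0(2)]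
    by (rule commute_mul_right)
  have "mconj K ** (S ** (Xi ** B)) - A1 ** (mconj Xi ** mconj K) = - (mconj V ** mconj U)"
    unfolding A1_def B_def qden_shift[OF iS ok0] pden_def
    by (simp add: matrix_expand matrix_inv_cancel[OF i0(1)] matrix_inv_cancel[OF i0(2)] c
        sylvester_discrete_rules(3,4)[OF iS Sy] algebra_simps)
  then have "matrix_inv A1 ** (mconj K ** (S ** (Xi ** B)) - A1 ** (mconj Xi ** mconj K)) ** matrix_inv B
      = matrix_inv A1 ** (- (mconj V ** mconj U)) ** matrix_inv B" by simp
  then show ?thesis
    by (simp add: A1_def B_def matrix_expand matrix_inv_cancel[OF i1(3)] matrix_inv_cancel[OF i0(4)]
        push_through[OF ok0])
qed

text \<open>Resolvent identity behind the formula for \<open>q(x+1)\<close>: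
  \<open>R(S\<Xi>) = S\<^sup>* R(\<Xi>) - \<epsilon> R(S\<Xi>) K\<^sup>* S \<Xi> V U R(\<Xi>)\<close>.\<close>
lemma shift_resolvent_forward:
  fixes S K Xi :: "complex^'n^'n" and U :: "complex^'n^'m" and V :: "complex^'m^'n"
  assumes iS: "invertible S" and Sy: "matrix_inv S ** K - K ** mconj S = V ** U"
    and cm: "S ** Xi = Xi ** S" and ok0: "inv_ok \<epsilon> K Xi" and ok1: "inv_ok \<epsilon> K (S ** Xi)"
  shows "qres \<epsilon> K (S ** Xi) = mconj S ** qres \<epsilon> K Xi
           - \<epsilon> *\<^sub>R (qres \<epsilon> K (S ** Xi) ** (mconj K ** (S ** (Xi ** (V ** (U ** qres \<epsilon> K Xi))))))"
proof -
  note i0 = inv_ok_invertible[OF ok0] and i1 = inv_ok_invertible[OF ok1]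
  define A where "A = qden \<epsilon> K Xi"
  define A1 where "A1 = qden \<epsilon> K (S ** Xi)"
  have "S ** (matrix_inv S ** K - K ** mconj S) = S ** (V ** U)" using Sy by simp
  then have SK: "S ** (K ** mconj S) = K - S ** (V ** U)"
    by (simp add: matrix_diff_ldistrib matrix_inv_cancel[OF iS] matrix_mul_assoc algebra_simps)
  then have SK': "S ** (K ** (mconj S ** Z)) = (K - S ** (V ** U)) ** Z" for Z :: "complex^'p^'n"
    by (simp add: matrix_mul_assoc)
  have "A1 ** mconj S = A + \<epsilon> *\<^sub>R (mconj K ** (S ** (Xi ** (V ** U))))"
    unfolding A1_def qden_shift[OF iS ok0] unfolding A_def qden_def
    by (simp add: matrix_expand matrix_inv_cancel[OF invertible_mconj[OF iS]] commute_mul_right[OF cm] SK SK'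
        algebra_simps)
  then have "matrix_inv A1 ** (A1 ** mconj S) ** matrix_inv A
      = matrix_inv A1 ** (A + \<epsilon> *\<^sub>R (mconj K ** (S ** (Xi ** (V ** U))))) ** matrix_inv A" by simp
  then show ?thesis
    by (simp add: A_def A1_def matrix_expand matrix_inv_cancel[OF i0(3)] matrix_inv_cancel[OF i1(3)]
        algebra_simps)
qed

text \<open>Resolvent identity behind the formula for \<open>q(x-1)\<close>:
  \<open>R(\<Xi>) = R(S\<Xi>) (S\<^sup>*)\<^sup>-\<^sup>1 + \<epsilon> R(S\<Xi>) V\<^sup>* U\<^sup>* \<Xi> K R(\<Xi>)\<close>.\<close>
lemma shift_resolvent_backward:
  fixes S K Xi :: "complex^'n^'n" and U :: "complex^'n^'m" and V :: "complex^'m^'n"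
  assumes iS: "invertible S" and Sy: "matrix_inv S ** K - K ** mconj S = V ** U"
    and cm: "S ** Xi = Xi ** S" and ok0: "inv_ok \<epsilon> K Xi" and ok1: "inv_ok \<epsilon> K (S ** Xi)"
  shows "qres \<epsilon> K Xi = qres \<epsilon> K (S ** Xi) ** matrix_inv (mconj S)
           + \<epsilon> *\<^sub>R (qres \<epsilon> K (S ** Xi) ** (mconj V ** (mconj U ** (Xi ** (K ** qres \<epsilon> K Xi)))))"
proof -
  note i0 = inv_ok_invertible[OF ok0] and i1 = inv_ok_invertible[OF ok1]
  define A where "A = qden \<epsilon> K Xi"
  define A1 where "A1 = qden \<epsilon> K (S ** Xi)"
  have c: "matrix_inv (mconj Xi) ** matrix_inv (mconj S) = matrix_inv (mconj S) ** matrix_inv (mconj Xi)"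
    using commute_inverses(3)[OF arg_cong[OF cm, of mconj, unfolded mconj_mult] invertible_mconj[OF iS] i0(2)]
    by simp
  have "A1 = matrix_inv (mconj S) ** A + \<epsilon> *\<^sub>R (mconj V ** (mconj U ** (Xi ** K)))"
    unfolding A1_def qden_shift[OF iS ok0] unfolding A_def qden_def
    by (simp add: matrix_expand c commute_mul_right[OF cm] sylvester_discrete_rules(4)[OF iS Sy]
        algebra_simps)
  then have "matrix_inv A1 ** A1 ** matrix_inv A
      = matrix_inv A1 ** (matrix_inv (mconj S) ** A + \<epsilon> *\<^sub>R (mconj V ** (mconj U ** (Xi ** K)))) ** matrix_inv A"
    by simp
  then show ?thesis
    by (simp add: A_def A1_def matrix_expand matrix_inv_cancel[OF i0(3)] matrix_inv_cancel[OF i1(3)])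
qed

lemma shift_p_difference:
  fixes S K Xi :: "complex^'n^'n" and U :: "complex^'n^'m" and V :: "complex^'m^'n"
  assumes sig: "\<sigma> * \<sigma> = 1" and iS: "invertible S" and Sy: "matrix_inv S ** K - K ** mconj S = V ** U"
    and cm: "S ** Xi = Xi ** S" and ok0: "inv_ok \<epsilon> K Xi" and ok1: "inv_ok \<epsilon> K (S ** Xi)"
  shows "psol \<epsilon> U V K (S ** Xi) - psol \<epsilon> U V K Xi
       = - \<epsilon> *\<^sub>R (qsol \<sigma> \<epsilon> U V K (S ** Xi) ** mconj (qsol \<sigma> \<epsilon> U V K Xi))"
proof -
  have "psol \<epsilon> U V K (S ** Xi) - psol \<epsilon> U V K Xi
      = \<epsilon> *\<^sub>R (U ** ((qres \<epsilon> K (S ** Xi) ** (mconj K ** (S ** Xi)) - qres \<epsilon> K Xi ** (mconj K ** Xi)) ** V))"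
    by (simp add: psol_eq[OF ok0] psol_eq[OF ok1] matrix_expand scaleR_diff_right)
  also have "\<dots> = - \<epsilon> *\<^sub>R (U ** (qres \<epsilon> K (S ** Xi) ** (mconj V ** (mconj U ** (pres \<epsilon> K Xi ** V)))))"
    by (simp add: shift_resolvent_p[OF iS Sy cm ok0 ok1] matrix_expand)
  also have "\<dots> = - \<epsilon> *\<^sub>R (qsol \<sigma> \<epsilon> U V K (S ** Xi) ** mconj (qsol \<sigma> \<epsilon> U V K Xi))"
    by (simp only: mconj_qsol[OF ok0]) (simp add: qsol_eq matrix_expand sig)
  finally show ?thesis .
qed

lemma shift_q_forward:
  fixes S K Xi :: "complex^'n^'n" and U :: "complex^'n^'m" and V :: "complex^'m^'n"
  assumes iS: "invertible S" and Sy: "matrix_inv S ** K - K ** mconj S = V ** U"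
    and cm: "S ** Xi = Xi ** S" and ok0: "inv_ok \<epsilon> K Xi" and ok1: "inv_ok \<epsilon> K (S ** Xi)"
  shows "qsol \<sigma> \<epsilon> U V K (S ** Xi)
       = \<sigma> *\<^sub>R (U ** (mconj S ** (qres \<epsilon> K Xi ** mconj V))) - psol \<epsilon> U V K (S ** Xi) ** qsol \<sigma> \<epsilon> U V K Xi"
proof -
  have "qsol \<sigma> \<epsilon> U V K (S ** Xi) = \<sigma> *\<^sub>R (U ** (qres \<epsilon> K (S ** Xi) ** mconj V))"
    by (rule qsol_eq)
  also have "\<dots> = \<sigma> *\<^sub>R (U ** ((mconj S ** qres \<epsilon> K Xi
      - \<epsilon> *\<^sub>R (qres \<epsilon> K (S ** Xi) ** (mconj K ** (S ** (Xi ** (V ** (U ** qres \<epsilon> K Xi))))))) ** mconj V))"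
    by (subst shift_resolvent_forward[OF iS Sy cm ok0 ok1]) (rule refl)
  finally show ?thesis
    by (simp add: psol_eq[OF ok1] qsol_eq matrix_expand algebra_simps)
qed

lemma shift_q_backward:
  fixes S K Xi :: "complex^'n^'n" and U :: "complex^'n^'m" and V :: "complex^'m^'n"
  assumes iS: "invertible S" and Sy: "matrix_inv S ** K - K ** mconj S = V ** U"
    and cm: "S ** Xi = Xi ** S" and ok0: "inv_ok \<epsilon> K Xi" and ok1: "inv_ok \<epsilon> K (S ** Xi)"
  shows "qsol \<sigma> \<epsilon> U V K Xi
       = \<sigma> *\<^sub>R (U ** (qres \<epsilon> K (S ** Xi) ** (matrix_inv (mconj S) ** mconj V)))
         + qsol \<sigma> \<epsilon> U V K (S ** Xi) ** mconj (psol \<epsilon> U V K Xi)"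
proof -
  have "qsol \<sigma> \<epsilon> U V K Xi = \<sigma> *\<^sub>R (U ** (qres \<epsilon> K Xi ** mconj V))"
    by (rule qsol_eq)
  also have "\<dots> = \<sigma> *\<^sub>R (U ** ((qres \<epsilon> K (S ** Xi) ** matrix_inv (mconj S)
      + \<epsilon> *\<^sub>R (qres \<epsilon> K (S ** Xi) ** (mconj V ** (mconj U ** (Xi ** (K ** qres \<epsilon> K Xi)))))) ** mconj V))"
    by (subst shift_resolvent_backward[OF iS Sy cm ok0 ok1]) (rule refl)
  finally show ?thesis
    by (simp add: mconj_psol[OF ok0] qsol_eq matrix_expand algebra_simps)
qed

section \<open>Time derivatives of the solution formula\<close>

definition qden_deriv :: "real \<Rightarrow> complex^'n^'n \<Rightarrow> complex^'n^'n \<Rightarrow> complex^'n^'n \<Rightarrow> complex^'n^'n" where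
  "qden_deriv \<epsilon> K Xi D =
     - (matrix_inv (mconj Xi) ** (mconj D ** matrix_inv (mconj Xi))) - \<epsilon> *\<^sub>R (mconj K ** (D ** K))"

lemma has_vector_derivative_qden:
  fixes Xi :: "real \<Rightarrow> complex^'n^'n"
  assumes d: "(Xi has_vector_derivative D) (at s)" and i: "invertible (mconj (Xi s))"
  shows "((\<lambda>y. qden \<epsilon> K (Xi y)) has_vector_derivative qden_deriv \<epsilon> K (Xi s) D) (at s)"
proof -
  have "((\<lambda>y. matrix_inv (mconj (Xi y)) - \<epsilon> *\<^sub>R (mconj K ** (Xi y ** K))) has_vector_derivative
      - (matrix_inv (mconj (Xi s)) ** mconj D ** matrix_inv (mconj (Xi s))) - \<epsilon> *\<^sub>R (mconj K ** (D ** K))) (at s)"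
    by (intro has_vector_derivative_diff has_vector_derivative_matrix_inv has_vector_derivative_mconj
        has_vector_derivative_matrix_rules d i)
  then show ?thesis unfolding qden_def qden_deriv_def by (simp add: matrix_mul_assoc)
qed

lemma has_vector_derivative_qres:
  fixes Xi :: "real \<Rightarrow> complex^'n^'n"
  assumes d: "(Xi has_vector_derivative D) (at s)" and ok: "inv_ok \<epsilon> K (Xi s)"
  shows "((\<lambda>y. qres \<epsilon> K (Xi y)) has_vector_derivative
      - (qres \<epsilon> K (Xi s) ** (qden_deriv \<epsilon> K (Xi s) D ** qres \<epsilon> K (Xi s)))) (at s)"
  using has_vector_derivative_matrix_inv[OF has_vector_derivative_qden[OF d inv_ok_invertible(2)[OF ok]]
      inv_ok_invertible(3)[OF ok]]
  by (simp add: matrix_mul_assoc)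

lemma has_vector_derivative_qsol:
  fixes Xi :: "real \<Rightarrow> complex^'n^'n"
  assumes d: "(Xi has_vector_derivative D) (at s)" and ok: "inv_ok \<epsilon> K (Xi s)"
  shows "((\<lambda>y. qsol \<sigma> \<epsilon> U V K (Xi y)) has_vector_derivative
      - (\<sigma> *\<^sub>R (U ** (qres \<epsilon> K (Xi s) ** (qden_deriv \<epsilon> K (Xi s) D ** (qres \<epsilon> K (Xi s) ** mconj V)))))) (at s)"
  unfolding qsol_eq
  using has_vector_derivative_matrix_rules(3)[OF has_vector_derivative_mul_const_left[OF
        has_vector_derivative_mul_const_right[OF has_vector_derivative_qres[OF d ok]]]]
  by (simp add: matrix_expand)

section \<open>The semi-discrete case\<close>

lemma omegaS_commute: "invertible (S::complex^'n^'n) \<Longrightarrow> S ** omegaS S = omegaS S ** S"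
  unfolding omegaS_def by (simp add: matrix_expand matrix_inv_cancel)

lemma Xi_sd_succ: "invertible (S::complex^'n^'n) \<Longrightarrow> Xi_sd S (x + 1) t = S ** Xi_sd S x t"
  unfolding Xi_sd_def by (simp add: mzpow_succ matrix_mul_assoc)

lemma Xi_sd_commute:
  assumes i: "invertible (S::complex^'n^'n)" shows "S ** Xi_sd S x t = Xi_sd S x t ** S"
proof -
  have c1: "S ** mzpow S x = mzpow S x ** S" by (rule mzpow_commute[OF i refl])
  have "S ** (- csc \<i> (t *\<^sub>R omegaS S)) = (- csc \<i> (t *\<^sub>R omegaS S)) ** S"
    by (simp add: matrix_expand csc_expand omegaS_commute[OF i])
  then have c2: "S ** mexp (- csc \<i> (t *\<^sub>R omegaS S)) = mexp (- csc \<i> (t *\<^sub>R omegaS S)) ** S"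
    by (rule mexp_commute)
  show ?thesis unfolding Xi_sd_def by (simp add: matrix_mul_assoc c1) (simp add: matrix_mul_assoc[symmetric] c2)
qed

lemma Xi_sd_derivative:
  assumes i: "invertible (S::complex^'n^'n)"
  shows "((\<lambda>s. Xi_sd S x s) has_vector_derivative (- csc \<i> (omegaS S)) ** Xi_sd S x t) (at t)"
proof -
  let ?N = "- csc \<i> (omegaS S)"
  have e: "Xi_sd S x s = mzpow S x ** mexp (0 + s *\<^sub>R ?N)" for s
    unfolding Xi_sd_def by (simp add: csc_scaleR)
  have "?N ** mzpow S x = mzpow S x ** ?N"
    by (rule mzpow_commute[OF i]) (simp add: matrix_expand csc_expand omegaS_commute[OF i])
  then show ?thesis
    unfolding e using has_vector_derivative_mul_const_left[OF has_vector_derivative_mexp[of 0 ?N]]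
    by (simp add: matrix_mul_assoc)
qed

text \<open>For \<open>\<Xi>' = -\<i> \<omega>(S) \<Xi>\<close> the derivative of \<open>A\<close> is \<open>-\<i> W\<close>, with the weighted denominator
  \<open>W = \<omega>(S)\<^sup>* (\<Xi>\<^sup>*)\<^sup>-\<^sup>1 - \<epsilon> K\<^sup>* \<omega>(S) \<Xi> K\<close>.\<close>
definition sd_weight :: "real \<Rightarrow> complex^'n^'n \<Rightarrow> complex^'n^'n \<Rightarrow> complex^'n^'n \<Rightarrow> complex^'n^'n" where
  "sd_weight \<epsilon> S K Xi = mconj (omegaS S) ** matrix_inv (mconj Xi) - \<epsilon> *\<^sub>R (mconj K ** (omegaS S ** (Xi ** K)))"

lemma mconj_omegaS: "invertible S \<Longrightarrow> mconj (omegaS S) = mconj S + matrix_inv (mconj S) - 2 *\<^sub>R mat 1"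
  by (simp add: omegaS_def mconj_distrib mconj_matrix_inv)

lemma qden_deriv_sd:
  fixes S Xi :: "complex^'n^'n"
  assumes iS: "invertible S" and iTh: "invertible (mconj Xi)" and cm: "S ** Xi = Xi ** S"
  shows "qden_deriv \<epsilon> K Xi (- csc \<i> (omegaS S) ** Xi) = - csc \<i> (sd_weight \<epsilon> S K Xi)"
proof -
  have c: "matrix_inv (mconj Xi) ** mconj S = mconj S ** matrix_inv (mconj Xi)"
    "matrix_inv (mconj Xi) ** matrix_inv (mconj S) = matrix_inv (mconj S) ** matrix_inv (mconj Xi)"
    using commute_inverses(1,3)[OF arg_cong[OF cm, of mconj, unfolded mconj_mult, symmetric] iTh invertible_mconj[OF iS]]
    by simp_all
  show ?thesis
    unfolding qden_deriv_def sd_weight_def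
    by (simp add: mconj_distrib mconj_csc csc_negc mconj_omegaS[OF iS] matrix_expand csc_expand
        matrix_inv_cancel[OF iTh] commute_mul_right[OF c(1)] commute_mul_right[OF c(2)] c algebra_simps)
qed

text \<open>Combining a forward and a backward discrete step with the time derivative: the identity
  \<open>A S\<^sup>* - 2A + (S\<^sup>*)\<^sup>-\<^sup>1 A - W = \<epsilon> K\<^sup>* \<Xi> V U - \<epsilon> V\<^sup>* U\<^sup>* \<Xi> K\<close>, a consequence of the Sylvester
  equation, and its translation into \<open>p q - q p\<^sup>*\<close>.\<close>
lemma sd_denominator_identity:
  fixes S K Xi :: "complex^'n^'n" and U :: "complex^'n^'m" and V :: "complex^'m^'n"
  assumes iS: "invertible S" and Sy: "matrix_inv S ** K - K ** mconj S = V ** U"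
    and cm: "S ** Xi = Xi ** S" and iTh: "invertible (mconj Xi)"
  shows "qden \<epsilon> K Xi ** mconj S - 2 *\<^sub>R qden \<epsilon> K Xi + matrix_inv (mconj S) ** qden \<epsilon> K Xi
           - sd_weight \<epsilon> S K Xi
         = \<epsilon> *\<^sub>R (mconj K ** (Xi ** (V ** U))) - \<epsilon> *\<^sub>R (mconj V ** (mconj U ** (Xi ** K)))"
proof -
  have c: "matrix_inv (mconj Xi) ** mconj S = mconj S ** matrix_inv (mconj Xi)"
    using commute_inverses(1)[OF arg_cong[OF cm, of mconj, unfolded mconj_mult, symmetric] iTh invertible_mconj[OF iS]]
    by simp
  have cSi: "matrix_inv S ** Xi = Xi ** matrix_inv S" by (rule matrix_inv_commute[OF cm iS])
  show ?thesis
    unfolding qden_def sd_weight_def mconj_omegaS[OF iS] unfolding omegaS_def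
    by (simp add: matrix_expand c sylvester_discrete_rules[OF iS Sy] commute_mul_right[OF cm]
        commute_mul_right[OF cSi] algebra_simps)
qed

lemma sd_resolvent:
  fixes S K Xi :: "complex^'n^'n" and U :: "complex^'n^'m" and V :: "complex^'m^'n"
  assumes iS: "invertible S" and Sy: "matrix_inv S ** K - K ** mconj S = V ** U"
    and cm: "S ** Xi = Xi ** S" and ok: "inv_ok \<epsilon> K Xi"
  shows "\<sigma> *\<^sub>R (U ** ((mconj S ** qres \<epsilon> K Xi - 2 *\<^sub>R qres \<epsilon> K Xi + qres \<epsilon> K Xi ** matrix_inv (mconj S)
           - qres \<epsilon> K Xi ** (sd_weight \<epsilon> S K Xi ** qres \<epsilon> K Xi)) ** mconj V))
       = psol \<epsilon> U V K Xi ** qsol \<sigma> \<epsilon> U V K Xi - qsol \<sigma> \<epsilon> U V K Xi ** mconj (psol \<epsilon> U V K Xi)"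
proof -
  note i = inv_ok_invertible[OF ok]
  define R where "R = qres \<epsilon> K Xi"
  have "R ** (qden \<epsilon> K Xi ** mconj S - 2 *\<^sub>R qden \<epsilon> K Xi + matrix_inv (mconj S) ** qden \<epsilon> K Xi
           - sd_weight \<epsilon> S K Xi) ** R
      = R ** (\<epsilon> *\<^sub>R (mconj K ** (Xi ** (V ** U))) - \<epsilon> *\<^sub>R (mconj V ** (mconj U ** (Xi ** K)))) ** R"
    by (simp add: sd_denominator_identity[OF iS Sy cm i(2)])
  then have st: "mconj S ** R - 2 *\<^sub>R R + R ** matrix_inv (mconj S) - R ** (sd_weight \<epsilon> S K Xi ** R)
      = \<epsilon> *\<^sub>R (R ** (mconj K ** (Xi ** (V ** (U ** R))))) - \<epsilon> *\<^sub>R (R ** (mconj V ** (mconj U ** (Xi ** (K ** R)))))"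
    by (simp add: R_def matrix_expand matrix_inv_cancel[OF i(3)])
  then show ?thesis
    unfolding mconj_psol[OF ok] unfolding psol_eq[OF ok] qsol_eq R_def[symmetric] st
    by (simp add: matrix_expand algebra_simps)
qed

text \<open>The algebra assembling the semi-discrete NLS equation from its ingredients:
  the two \<open>p\<close>-differences, the two neighbour formulas and the time-derivative identity.\<close>
lemma sd_assemble:
  fixes qp qb0 q0 qm pp p0 pb0 pbm a c d ciqt :: "complex^'m^'m"
  assumes h1: "qp ** qb0 = - \<epsilon> *\<^sub>R (pp - p0)" and h2: "qb0 ** qm = - \<epsilon> *\<^sub>R (pb0 - pbm)"
    and h3: "qp = a - pp ** q0" and h4: "qm = c + q0 ** pbm" and h5: "ciqt = - d"
    and h6: "a - 2 *\<^sub>R q0 + c - d = p0 ** q0 - q0 ** pb0" and eps: "\<epsilon> * \<epsilon> = 1"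
  shows "ciqt + qp - 2 *\<^sub>R q0 + qm - \<epsilon> *\<^sub>R (qp ** qb0 ** q0 + q0 ** qb0 ** qm) = 0"
proof -
  have 1: "qp ** qb0 ** q0 = - \<epsilon> *\<^sub>R ((pp - p0) ** q0)"
    using h1 by (simp add: matrix_mul_scaleR_left matrix_mul_neg_left)
  have 2: "q0 ** qb0 ** qm = - \<epsilon> *\<^sub>R (q0 ** (pb0 - pbm))"
    by (simp add: matrix_mul_assoc[symmetric] h2 matrix_mul_scaleR_right matrix_mul_neg_right)
  have d: "d = a - 2 *\<^sub>R q0 + c - p0 ** q0 + q0 ** pb0" using h6 by (simp add: algebra_simps)
  show ?thesis
    unfolding 1 2 h5 d
    by (simp add: h3 h4 matrix_diff_rdistrib matrix_diff_ldistrib scaleR_add_right eps algebra_simps)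
qed

lemma semi_discrete_equation:
  fixes S K Xi :: "complex^'n^'n" and U :: "complex^'n^'m" and V :: "complex^'m^'n"
  assumes eps: "\<epsilon> * \<epsilon> = 1" and sig: "\<sigma> * \<sigma> = 1"
    and iS: "invertible S" and Sy: "matrix_inv S ** K - K ** mconj S = V ** U"
    and cm: "S ** Xi = Xi ** S" and okm: "inv_ok \<epsilon> K Xi" and ok0: "inv_ok \<epsilon> K (S ** Xi)"
    and okp: "inv_ok \<epsilon> K (S ** (S ** Xi))"
    and qt: "csc \<i> qt = - (\<sigma> *\<^sub>R (U ** (qres \<epsilon> K (S ** Xi) ** (sd_weight \<epsilon> S K (S ** Xi)
                ** (qres \<epsilon> K (S ** Xi) ** mconj V)))))"
  shows "csc \<i> qt + qsol \<sigma> \<epsilon> U V K (S ** (S ** Xi)) - 2 *\<^sub>R qsol \<sigma> \<epsilon> U V K (S ** Xi) + qsol \<sigma> \<epsilon> U V K Xi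
    - \<epsilon> *\<^sub>R (qsol \<sigma> \<epsilon> U V K (S ** (S ** Xi)) ** mconj (qsol \<sigma> \<epsilon> U V K (S ** Xi)) ** qsol \<sigma> \<epsilon> U V K (S ** Xi)
       + qsol \<sigma> \<epsilon> U V K (S ** Xi) ** mconj (qsol \<sigma> \<epsilon> U V K (S ** Xi)) ** qsol \<sigma> \<epsilon> U V K Xi) = 0"
proof -
  define X0 where "X0 = S ** Xi"
  define q where "q = (\<lambda>Z. qsol \<sigma> \<epsilon> U V K Z)"
  define p where "p = (\<lambda>Z. psol \<epsilon> U V K Z)"
  have cm0: "S ** X0 = X0 ** S" by (simp add: X0_def matrix_mul_assoc cm)
  note ok0 = ok0[folded X0_def] and okp = okp[folded X0_def]
  have pdiff: "q (S ** Z) ** mconj (q Z) = - \<epsilon> *\<^sub>R (p (S ** Z) - p Z)"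
    if "S ** Z = Z ** S" "inv_ok \<epsilon> K Z" "inv_ok \<epsilon> K (S ** Z)" for Z
    using shift_p_difference[OF sig iS Sy that] eps by (simp add: p_def q_def)
  show ?thesis
    unfolding X0_def[symmetric] q_def[symmetric]
  proof (rule sd_assemble[OF pdiff[OF cm0 ok0 okp] _ _ _ qt[folded X0_def] _ eps])
    show "mconj (q X0) ** q Xi = - \<epsilon> *\<^sub>R (mconj (p X0) - mconj (p Xi))"
      using arg_cong[OF pdiff[OF cm okm ok0[unfolded X0_def]], of mconj] eps
      by (simp add: X0_def mconj_distrib)
    show "q (S ** X0) = \<sigma> *\<^sub>R (U ** (mconj S ** (qres \<epsilon> K X0 ** mconj V))) - p (S ** X0) ** q X0"
      using shift_q_forward[OF iS Sy cm0 ok0 okp] by (simp add: p_def q_def)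
    show "q Xi = \<sigma> *\<^sub>R (U ** (qres \<epsilon> K X0 ** (matrix_inv (mconj S) ** mconj V))) + q X0 ** mconj (p Xi)"
      using shift_q_backward[OF iS Sy cm okm ok0[unfolded X0_def]] by (simp add: p_def q_def X0_def)
    show "\<sigma> *\<^sub>R (U ** (mconj S ** (qres \<epsilon> K X0 ** mconj V))) - 2 *\<^sub>R q X0
        + \<sigma> *\<^sub>R (U ** (qres \<epsilon> K X0 ** (matrix_inv (mconj S) ** mconj V)))
        - \<sigma> *\<^sub>R (U ** (qres \<epsilon> K X0 ** (sd_weight \<epsilon> S K X0 ** (qres \<epsilon> K X0 ** mconj V))))
        = p X0 ** q X0 - q X0 ** mconj (p X0)"
      using sd_resolvent[OF iS Sy cm0 ok0, of \<sigma>]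
      by (simp add: p_def q_def qsol_eq matrix_expand algebra_simps)
  qed
qed

text \<open>The semi-discrete case: \<open>\<Xi> = S\<^sup>x exp(-\<i> t \<omega>(S))\<close> is a lattice of shifts in \<open>x\<close>
  and solves \<open>\<Xi>\<^sub>t = -\<i> \<omega>(S) \<Xi>\<close>.\<close>
theorem semi_discrete_case:
  fixes S K :: "complex^'n^'n" and U :: "complex^'n^'m" and V :: "complex^'m^'n" and x :: int and t :: real
  assumes eps: "\<epsilon> * \<epsilon> = 1" and sig: "\<sigma> * \<sigma> = 1"
    and iS: "invertible S" and Sy: "matrix_inv S ** K - K ** mconj S = V ** U"
    and okm: "inv_ok \<epsilon> K (Xi_sd S (x - 1) t)" and ok0: "inv_ok \<epsilon> K (Xi_sd S x t)"
    and okp: "inv_ok \<epsilon> K (Xi_sd S (x + 1) t)"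
  defines "q \<equiv> \<lambda>x t. qsol \<sigma> \<epsilon> U V K (Xi_sd S x t)" and "p \<equiv> \<lambda>x t. psol \<epsilon> U V K (Xi_sd S x t)"
  shows "\<exists>qt. ((\<lambda>s. q x s) has_vector_derivative qt) (at t)
      \<and> csc \<i> qt + q (x + 1) t - 2 *\<^sub>R q x t + q (x - 1) t
          - \<epsilon> *\<^sub>R (q (x + 1) t ** mconj (q x t) ** q x t + q x t ** mconj (q x t) ** q (x - 1) t) = 0
      \<and> p (x + 1) t - p x t = - \<epsilon> *\<^sub>R (q (x + 1) t ** mconj (q x t))"
proof -
  define Xm where "Xm = Xi_sd S (x - 1) t"
  have X0: "Xi_sd S x t = S ** Xm" and Xp: "Xi_sd S (x + 1) t = S ** (S ** Xm)"
    using Xi_sd_succ[OF iS, of "x - 1" t] Xi_sd_succ[OF iS, of x t] by (simp_all add: Xm_def)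
  have cm: "S ** Xi_sd S y t = Xi_sd S y t ** S" for y by (rule Xi_sd_commute[OF iS])
  define qt where "qt = csc \<i> (\<sigma> *\<^sub>R (U ** (qres \<epsilon> K (Xi_sd S x t) ** (sd_weight \<epsilon> S K (Xi_sd S x t)
      ** (qres \<epsilon> K (Xi_sd S x t) ** mconj V)))))"
  have "((\<lambda>s. q x s) has_vector_derivative qt) (at t)"
    using has_vector_derivative_qsol[OF Xi_sd_derivative[OF iS] ok0, of \<sigma> U V]
    unfolding qden_deriv_sd[OF iS inv_ok_invertible(2)[OF ok0] cm]
    by (simp add: q_def qt_def matrix_expand csc_expand)
  moreover have "csc \<i> qt = - (\<sigma> *\<^sub>R (U ** (qres \<epsilon> K (S ** Xm) ** (sd_weight \<epsilon> S K (S ** Xm)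
      ** (qres \<epsilon> K (S ** Xm) ** mconj V)))))"
    by (simp add: qt_def X0 csc_ii)
  note equation = semi_discrete_equation[OF eps sig iS Sy cm[of "x - 1", folded Xm_def]
      okm[folded Xm_def] ok0[unfolded X0] okp[unfolded Xp] this]
  ultimately show ?thesis
    using shift_p_difference[OF sig iS Sy cm[of x] ok0 okp[unfolded Xi_sd_succ[OF iS]]]
    unfolding q_def p_def X0 Xp Xm_def[symmetric] by (intro exI[of _ qt] conjI) (simp_all add: equation)
qed

section \<open>The fully discrete case\<close>

definition Omega_num :: "complex^'n^'n \<Rightarrow> complex^'n^'n" where
  "Omega_num S = mat 1 + csc \<i> (mat 1 - matrix_inv S)"

definition Omega_den :: "complex^'n^'n \<Rightarrow> complex^'n^'n" where
  "Omega_den S = mat 1 - csc \<i> (mat 1 - S)"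

lemma OmegaS_eq: "OmegaS S = Omega_num S ** matrix_inv (Omega_den S)"
  by (simp add: OmegaS_def Omega_num_def Omega_den_def)

lemma Omega_den_commute: "S ** Omega_den S = Omega_den S ** (S::complex^'n^'n)"
  by (simp add: Omega_den_def matrix_expand csc_expand)

lemma Omega_num_commute:
  "invertible S \<Longrightarrow> S ** Omega_num S = Omega_num S ** (S::complex^'n^'n)"
  by (simp add: Omega_num_def matrix_expand csc_expand matrix_inv_cancel)

lemma Omega_den_num_commute:
  "invertible S \<Longrightarrow> Omega_den S ** Omega_num S = Omega_num S ** Omega_den (S::complex^'n^'n)"
  by (simp add: Omega_den_def Omega_num_def matrix_expand csc_expand matrix_inv_cancel algebra_simps)

lemma Omega_den_mult_OmegaS:
  assumes "invertible (S::complex^'n^'n)" "invertible (Omega_den S)"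
  shows "Omega_den S ** OmegaS S = Omega_num S"
  by (simp add: OmegaS_eq matrix_mul_assoc Omega_den_num_commute[OF assms(1)])
     (simp add: matrix_mul_assoc[symmetric] matrix_inv_cancel[OF assms(2)])

lemma OmegaS_commute:
  assumes "invertible (S::complex^'n^'n)" "invertible (Omega_den S)"
  shows "S ** OmegaS S = OmegaS S ** S"
  using matrix_inv_commute[OF Omega_den_commute[symmetric] assms(2)]
  by (simp add: OmegaS_eq matrix_mul_assoc Omega_num_commute[OF assms(1)])
     (simp add: matrix_mul_assoc[symmetric])

lemma invertible_OmegaS:
  "invertible (Omega_num S) \<Longrightarrow> invertible (Omega_den S) \<Longrightarrow> invertible (OmegaS S)"
  unfolding OmegaS_eq by (rule invertible_mult[OF _ invertible_matrix_inv])

lemma mconj_Omega_den: "mconj (Omega_den S) = mat 1 + csc \<i> (mat 1 - mconj S)"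
  by (simp add: Omega_den_def mconj_distrib mconj_csc csc_negc)

lemma mconj_Omega_num:
  "invertible S \<Longrightarrow> mconj (Omega_num S) = mat 1 - csc \<i> (mat 1 - matrix_inv (mconj S))"
  by (simp add: Omega_num_def mconj_distrib mconj_csc csc_negc mconj_matrix_inv)

lemma sylvester_Omega_rules:
  fixes S K :: "complex^'n^'n" and U :: "complex^'n^'m" and V :: "complex^'m^'n"
  assumes iS: "invertible S" and Sy: "matrix_inv S ** K - K ** mconj S = V ** U"
  shows "K ** mconj (Omega_den S) = Omega_num S ** K + csc \<i> (V ** U)"
    "\<And>Z::complex^'p^'n. K ** (mconj (Omega_den S) ** Z) = Omega_num S ** (K ** Z) + csc \<i> (V ** (U ** Z))"
    "mconj (Omega_num S) ** mconj K = mconj K ** Omega_den S + csc \<i> (mconj V ** mconj U)"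
    "\<And>Z::complex^'p^'n. mconj (Omega_num S) ** (mconj K ** Z)
        = mconj K ** (Omega_den S ** Z) + csc \<i> (mconj V ** (mconj U ** Z))"
proof -
  note Sy_rules = sylvester_discrete_rules[OF iS Sy]
  have SK: "K ** mconj S = matrix_inv S ** K - V ** U" using Sy_rules(1) by simp
  show F1: "K ** mconj (Omega_den S) = Omega_num S ** K + csc \<i> (V ** U)"
    by (simp add: mconj_Omega_den Omega_num_def matrix_expand csc_expand SK algebra_simps)
  show F2: "mconj (Omega_num S) ** mconj K = mconj K ** Omega_den S + csc \<i> (mconj V ** mconj U)"
    by (simp add: mconj_Omega_num[OF iS] Omega_den_def matrix_expand csc_expand Sy_rules algebra_simps)
  show "K ** (mconj (Omega_den S) ** Z) = Omega_num S ** (K ** Z) + csc \<i> (V ** (U ** Z))"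
    for Z :: "complex^'p^'n"
    by (simp add: matrix_mul_assoc F1 matrix_add_rdistrib csc_mult_left)
  show "mconj (Omega_num S) ** (mconj K ** Z) = mconj K ** (Omega_den S ** Z) + csc \<i> (mconj V ** (mconj U ** Z))"
    for Z :: "complex^'p^'n"
    by (simp add: matrix_mul_assoc F2 matrix_add_rdistrib csc_mult_left)
qed

lemma qden_OmegaS:
  fixes S Xi :: "complex^'n^'n"
  assumes ia: "invertible (Omega_den S)" and ib: "invertible (Omega_num S)" and iTh: "invertible (mconj Xi)"
  shows "qden \<epsilon> K (OmegaS S ** Xi) = matrix_inv (mconj Xi) ** (mconj (Omega_den S) ** matrix_inv (mconj (Omega_num S)))
           - \<epsilon> *\<^sub>R (mconj K ** (OmegaS S ** (Xi ** K)))"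
proof -
  have iac: "invertible (mconj (Omega_den S))" and ibc: "invertible (mconj (Omega_num S))"
    using invertible_mconj ia ib by blast+
  have "mconj (OmegaS S) = mconj (Omega_num S) ** matrix_inv (mconj (Omega_den S))"
    by (simp add: OmegaS_eq mconj_mult mconj_matrix_inv[OF ia])
  then have "matrix_inv (mconj (OmegaS S ** Xi))
      = matrix_inv (mconj Xi) ** (mconj (Omega_den S) ** matrix_inv (mconj (Omega_num S)))"
    by (simp add: mconj_mult matrix_inv_mult invertible_mult invertible_matrix_inv iac ibc iTh
        matrix_inv_inv[OF iac])
  then show ?thesis by (simp add: qden_def matrix_mul_assoc)
qed

lemma fd_denominator_identity:
  fixes S K Xi :: "complex^'n^'n" and U :: "complex^'n^'m" and V :: "complex^'m^'n"
  assumes iS: "invertible S" and ia: "invertible (Omega_den S)" and ib: "invertible (Omega_num S)"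
    and Sy: "matrix_inv S ** K - K ** mconj S = V ** U"
    and cm: "S ** Xi = Xi ** S" and iTh: "invertible (mconj Xi)"
  shows "qden \<epsilon> K Xi ** mconj (Omega_den S) - mconj (Omega_num S) ** qden \<epsilon> K (OmegaS S ** Xi)
       = csc \<i> (\<epsilon> *\<^sub>R (mconj V ** (mconj U ** (OmegaS S ** (Xi ** K)))) - \<epsilon> *\<^sub>R (mconj K ** (Xi ** (V ** U))))"
proof -
  let ?a = "Omega_den S" and ?b = "Omega_num S" and ?ac = "mconj (Omega_den S)" and ?bc = "mconj (Omega_num S)"
  have ibc: "invertible ?bc" by (rule invertible_mconj[OF ib])
  have cm': "mconj Xi ** mconj S = mconj S ** mconj Xi" using arg_cong[OF cm, of mconj] by (simp add: mconj_mult)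
  have cTi: "matrix_inv (mconj S) ** mconj Xi = mconj Xi ** matrix_inv (mconj S)"
    using matrix_inv_commute[OF cm'[symmetric] invertible_mconj[OF iS]] .
  have cXb: "Xi ** ?b = ?b ** Xi"
    using matrix_inv_commute[OF cm iS] by (simp add: Omega_num_def matrix_expand csc_expand cm)
  have cbcThi: "?bc ** matrix_inv (mconj Xi) = matrix_inv (mconj Xi) ** ?bc"
    using matrix_inv_commute[OF _ iTh, of ?bc] cTi
    by (simp add: mconj_Omega_num[OF iS] matrix_expand csc_expand)
  have cThiac: "matrix_inv (mconj Xi) ** ?ac = ?ac ** matrix_inv (mconj Xi)"
    using matrix_inv_commute[OF cm' iTh] by (simp add: mconj_Omega_den matrix_expand csc_expand)
  have cbcac: "?bc ** ?ac = ?ac ** ?bc"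
    using arg_cong[OF Omega_den_num_commute[OF iS], of mconj] by (simp add: mconj_mult)
  have F3: "?a ** OmegaS S = ?b" by (rule Omega_den_mult_OmegaS[OF iS ia])
  then have F3': "?a ** (OmegaS S ** Z) = ?b ** Z" for Z :: "complex^'n^'n" by (simp add: matrix_mul_assoc)
  show ?thesis
    unfolding qden_OmegaS[OF ia ib iTh] unfolding qden_def
    by (simp add: matrix_expand csc_expand sylvester_Omega_rules[OF iS Sy] F3 F3'
        cXb commute_mul_right[OF cXb] cbcThi commute_mul_right[OF cbcThi] cbcac commute_mul_right[OF cbcac]
        matrix_inv_cancel[OF ibc] cThiac algebra_simps)
qed

lemma fd_resolvent:
  fixes S K Xi :: "complex^'n^'n" and U :: "complex^'n^'m" and V :: "complex^'m^'n"
  assumes iS: "invertible S" and ia: "invertible (Omega_den S)" and ib: "invertible (Omega_num S)"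
    and Sy: "matrix_inv S ** K - K ** mconj S = V ** U"
    and cm: "S ** Xi = Xi ** S" and ok0: "inv_ok \<epsilon> K Xi" and ok1: "inv_ok \<epsilon> K (OmegaS S ** Xi)"
  shows "\<sigma> *\<^sub>R (U ** ((csc \<i> (qres \<epsilon> K (OmegaS S ** Xi) - qres \<epsilon> K Xi) + mconj S ** qres \<epsilon> K (OmegaS S ** Xi)
            - qres \<epsilon> K (OmegaS S ** Xi) - qres \<epsilon> K Xi + qres \<epsilon> K Xi ** matrix_inv (mconj S)) ** mconj V))
       = psol \<epsilon> U V K Xi ** qsol \<sigma> \<epsilon> U V K (OmegaS S ** Xi)
         - qsol \<sigma> \<epsilon> U V K Xi ** mconj (psol \<epsilon> U V K (OmegaS S ** Xi))"
proof -
  note i0 = inv_ok_invertible[OF ok0] and i1 = inv_ok_invertible[OF ok1]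
  define R where "R = qres \<epsilon> K Xi"
  define R1 where "R1 = qres \<epsilon> K (OmegaS S ** Xi)"
  let ?ac = "mconj (Omega_den S)" and ?bc = "mconj (Omega_num S)"
  have "?ac ** R1 - R ** ?bc
      = R ** ((qden \<epsilon> K Xi ** ?ac - ?bc ** qden \<epsilon> K (OmegaS S ** Xi)) ** R1)"
    by (simp add: R_def R1_def matrix_expand matrix_inv_cancel[OF i0(3)] matrix_inv_cancel[OF i1(3)])
  also have "\<dots> = R ** (csc \<i> (\<epsilon> *\<^sub>R (mconj V ** (mconj U ** (OmegaS S ** (Xi ** K))))
      - \<epsilon> *\<^sub>R (mconj K ** (Xi ** (V ** U)))) ** R1)"
    by (simp only: fd_denominator_identity[OF iS ia ib Sy cm i0(2)])
  finally have st: "?ac ** R1 - R ** ?bc = \<dots>" .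
  have st3: "csc \<i> (R1 - R) + mconj S ** R1 - R1 - R + R ** matrix_inv (mconj S) = csc \<i> (?ac ** R1 - R ** ?bc)"
    by (simp add: mconj_Omega_den mconj_Omega_num[OF iS] matrix_expand csc_expand csc_minus_one algebra_simps)
  show ?thesis
    unfolding R_def[symmetric] R1_def[symmetric] st3 st mconj_psol[OF ok1]
    unfolding psol_eq[OF ok0] qsol_eq R_def[symmetric] R1_def[symmetric]
    by (simp add: matrix_expand csc_expand csc_minus_one algebra_simps)
qed

text \<open>The algebra assembling the fully discrete NLS equation from its ingredients.\<close>
lemma fd_assemble:
  fixes q0 qT qPT qm p0 pT pPT pm a c :: "complex^'m^'m"
  assumes h1: "qPT ** mconj qT = - \<epsilon> *\<^sub>R (pPT - pT)" and h2: "mconj q0 ** qm = - \<epsilon> *\<^sub>R (mconj p0 - mconj pm)"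
    and h3: "qPT = a - pPT ** qT" and h4: "qm = c + q0 ** mconj pm"
    and h5: "csc \<i> (qT - q0) + a - qT - q0 + c = p0 ** qT - q0 ** mconj pT" and eps: "\<epsilon> * \<epsilon> = 1"
  shows "csc \<i> (qT - q0) + (qPT - qT) - (q0 - qm) - \<epsilon> *\<^sub>R (qPT ** mconj qT ** qT)
         - \<epsilon> *\<^sub>R (q0 ** mconj q0 ** qm) + (pT - p0) ** qT + q0 ** mconj (pT - p0) = 0"
proof -
  have 1: "qPT ** mconj qT ** qT = - \<epsilon> *\<^sub>R ((pPT - pT) ** qT)"
    using h1 by (simp add: matrix_mul_scaleR_left matrix_mul_neg_left)
  have 2: "q0 ** mconj q0 ** qm = - \<epsilon> *\<^sub>R (q0 ** (mconj p0 - mconj pm))"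
    by (simp add: matrix_mul_assoc[symmetric] h2 matrix_mul_scaleR_right matrix_mul_neg_right)
  have 5: "csc \<i> (qT - q0) = p0 ** qT - q0 ** mconj pT - a + qT + q0 - c"
    using h5 by (simp add: algebra_simps)
  show ?thesis
    unfolding 1 2 5 by (simp add: h3 h4 mconj_diff matrix_diff_rdistrib matrix_diff_ldistrib eps algebra_simps)
qed

lemma Xi_fd_succ_x: "invertible (S::complex^'n^'n) \<Longrightarrow> Xi_fd S (x + 1) t = S ** Xi_fd S x t"
  unfolding Xi_fd_def by (simp add: mzpow_succ matrix_mul_assoc)

lemma Xi_fd_succ_t:
  assumes iS: "invertible (S::complex^'n^'n)" and iO: "invertible (OmegaS S)"
    and c: "S ** OmegaS S = OmegaS S ** S"
  shows "Xi_fd S x (t + 1) = OmegaS S ** Xi_fd S x t"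
proof -
  have "OmegaS S ** mzpow S x = mzpow S x ** OmegaS S" by (rule mzpow_commute[OF iS c[symmetric]])
  then show ?thesis unfolding Xi_fd_def by (simp add: mzpow_succ[OF iO]) (simp add: matrix_mul_assoc)
qed

lemma Xi_fd_commute:
  assumes iS: "invertible (S::complex^'n^'n)" and iO: "invertible (OmegaS S)"
    and c: "S ** OmegaS S = OmegaS S ** S"
  shows "S ** Xi_fd S x t = Xi_fd S x t ** S"
proof -
  have c1: "S ** mzpow S x = mzpow S x ** S" by (rule mzpow_commute[OF iS refl])
  have c2: "S ** mzpow (OmegaS S) t = mzpow (OmegaS S) t ** S" by (rule mzpow_commute[OF iO c])
  show ?thesis unfolding Xi_fd_def by (simp add: matrix_mul_assoc c1) (simp add: matrix_mul_assoc[symmetric] c2)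
qed

lemma fully_discrete_equation:
  fixes S K Xm X0 :: "complex^'n^'n" and U :: "complex^'n^'m" and V :: "complex^'m^'n"
  assumes eps: "\<epsilon> * \<epsilon> = 1" and sig: "\<sigma> * \<sigma> = 1"
    and iS: "invertible S" and ia: "invertible (Omega_den S)" and ib: "invertible (Omega_num S)"
    and Sy: "matrix_inv S ** K - K ** mconj S = V ** U"
    and X0: "X0 = S ** Xm" and cm: "S ** Xm = Xm ** S"
    and okm: "inv_ok \<epsilon> K Xm" and ok0: "inv_ok \<epsilon> K X0" and okp: "inv_ok \<epsilon> K (S ** X0)"
    and okT: "inv_ok \<epsilon> K (OmegaS S ** X0)" and okPT: "inv_ok \<epsilon> K (S ** (OmegaS S ** X0))"
  defines "q \<equiv> qsol \<sigma> \<epsilon> U V K" and "p \<equiv> psol \<epsilon> U V K"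
  shows "csc \<i> (q (OmegaS S ** X0) - q X0) + (q (S ** (OmegaS S ** X0)) - q (OmegaS S ** X0)) - (q X0 - q Xm)
      - \<epsilon> *\<^sub>R (q (S ** (OmegaS S ** X0)) ** mconj (q (OmegaS S ** X0)) ** q (OmegaS S ** X0))
      - \<epsilon> *\<^sub>R (q X0 ** mconj (q X0) ** q Xm)
      + (p (OmegaS S ** X0) - p X0) ** q (OmegaS S ** X0) + q X0 ** mconj (p (OmegaS S ** X0) - p X0) = 0"
proof -
  let ?XT = "OmegaS S ** X0"
  have cm0: "S ** X0 = X0 ** S" by (simp add: X0 matrix_mul_assoc cm)
  have cmT: "S ** ?XT = ?XT ** S"
    by (metis matrix_mul_assoc OmegaS_commute[OF iS ia] cm0)
  note okm' = ok0[unfolded X0]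
  show ?thesis
  proof (rule fd_assemble[OF _ _ _ _ _ eps])
    show "q (S ** ?XT) ** mconj (q ?XT) = - \<epsilon> *\<^sub>R (p (S ** ?XT) - p ?XT)"
      using shift_p_difference[OF sig iS Sy cmT okT okPT] eps by (simp add: p_def q_def)
    show "mconj (q X0) ** q Xm = - \<epsilon> *\<^sub>R (mconj (p X0) - mconj (p Xm))"
      using arg_cong[OF shift_p_difference[OF sig iS Sy cm okm okm'], of mconj] eps
      by (simp add: p_def q_def X0 mconj_distrib)
    show "q (S ** ?XT) = \<sigma> *\<^sub>R (U ** (mconj S ** (qres \<epsilon> K ?XT ** mconj V))) - p (S ** ?XT) ** q ?XT"
      using shift_q_forward[OF iS Sy cmT okT okPT] by (simp add: p_def q_def)
    show "q Xm = \<sigma> *\<^sub>R (U ** (qres \<epsilon> K X0 ** (matrix_inv (mconj S) ** mconj V))) + q X0 ** mconj (p Xm)"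
      using shift_q_backward[OF iS Sy cm okm okm'] by (simp add: p_def q_def X0)
    show "csc \<i> (q ?XT - q X0) + \<sigma> *\<^sub>R (U ** (mconj S ** (qres \<epsilon> K ?XT ** mconj V))) - q ?XT - q X0
        + \<sigma> *\<^sub>R (U ** (qres \<epsilon> K X0 ** (matrix_inv (mconj S) ** mconj V))) = p X0 ** q ?XT - q X0 ** mconj (p ?XT)"
      using fd_resolvent[OF iS ia ib Sy cm0 ok0 okT, of \<sigma>]
      by (simp add: p_def q_def qsol_eq matrix_expand csc_expand algebra_simps)
  qed
qed

text \<open>The fully discrete case: \<open>\<Xi> = S\<^sup>x \<Omega>(S)\<^sup>t\<close>, with steps \<open>S\<close> in \<open>x\<close> and \<open>\<Omega>(S)\<close> in \<open>t\<close>.\<close>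
theorem fully_discrete_case:
  fixes S K :: "complex^'n^'n" and U :: "complex^'n^'m" and V :: "complex^'m^'n" and x t :: int
  assumes eps: "\<epsilon> * \<epsilon> = 1" and sig: "\<sigma> * \<sigma> = 1" and iS: "invertible S"
    and ia: "invertible (mat 1 - csc \<i> (mat 1 - S))" and ib: "invertible (mat 1 + csc \<i> (mat 1 - matrix_inv S))"
    and Sy: "matrix_inv S ** K - K ** mconj S = V ** U"
    and ok0: "inv_ok \<epsilon> K (Xi_fd S x t)" and okp: "inv_ok \<epsilon> K (Xi_fd S (x + 1) t)"
    and okm: "inv_ok \<epsilon> K (Xi_fd S (x - 1) t)" and okT: "inv_ok \<epsilon> K (Xi_fd S x (t + 1))"
    and okPT: "inv_ok \<epsilon> K (Xi_fd S (x + 1) (t + 1))"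
  defines "q \<equiv> \<lambda>x t. qsol \<sigma> \<epsilon> U V K (Xi_fd S x t)" and "p \<equiv> \<lambda>x t. psol \<epsilon> U V K (Xi_fd S x t)"
  shows "csc \<i> (q x (t + 1) - q x t) + (q (x + 1) (t + 1) - q x (t + 1)) - (q x t - q (x - 1) t)
        - \<epsilon> *\<^sub>R (q (x + 1) (t + 1) ** mconj (q x (t + 1)) ** q x (t + 1))
        - \<epsilon> *\<^sub>R (q x t ** mconj (q x t) ** q (x - 1) t)
        + (p x (t + 1) - p x t) ** q x (t + 1) + q x t ** mconj (p x (t + 1) - p x t) = 0
      \<and> p (x + 1) t - p x t = - \<epsilon> *\<^sub>R (q (x + 1) t ** mconj (q x t))"
proof -
  note ia = ia[folded Omega_den_def] and ib = ib[folded Omega_num_def]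
  have iO: "invertible (OmegaS S)" by (rule invertible_OmegaS[OF ib ia])
  note cO = OmegaS_commute[OF iS ia]
  have cm: "S ** Xi_fd S y t = Xi_fd S y t ** S" for y by (rule Xi_fd_commute[OF iS iO cO])
  have X0: "Xi_fd S x t = S ** Xi_fd S (x - 1) t" using Xi_fd_succ_x[OF iS, of "x - 1" t] by simp
  have XT: "Xi_fd S x (t + 1) = OmegaS S ** Xi_fd S x t" by (rule Xi_fd_succ_t[OF iS iO cO])
  have Xp: "Xi_fd S (x + 1) t' = S ** Xi_fd S x t'" for t' by (rule Xi_fd_succ_x[OF iS])
  have XPT: "Xi_fd S (x + 1) (t + 1) = S ** (OmegaS S ** Xi_fd S x t)" by (simp add: Xp XT)
  show ?thesis
    using fully_discrete_equation[OF eps sig iS ia ib Sy X0 cm[of "x - 1"] okm ok0 okp[unfolded Xp]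
        okT[unfolded XT] okPT[unfolded XPT]]
      shift_p_difference[OF sig iS Sy cm[of x] ok0 okp[unfolded Xp]]
    unfolding q_def p_def XT XPT Xp by simp
qed

section \<open>The continuous case\<close>

lemma Xi_c_dx: "((\<lambda>y. Xi_c S y t) has_vector_derivative (- S) ** Xi_c S x t) (at x)"
proof -
  have "Xi_c S y t = mexp (- csc \<i> (t *\<^sub>R (S ** S)) + y *\<^sub>R (- S))" for y
    unfolding Xi_c_def by (simp add: algebra_simps)
  then show ?thesis
    by (simp only:) (rule has_vector_derivative_mexp, simp add: matrix_expand csc_expand)
qed

lemma Xi_c_dt: "((\<lambda>s. Xi_c S x s) has_vector_derivative (- csc \<i> (S ** S)) ** Xi_c S x t) (at t)"
proof -
  have "Xi_c S x s = mexp (- (x *\<^sub>R S) + s *\<^sub>R (- csc \<i> (S ** S)))" for s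
    unfolding Xi_c_def by (simp add: algebra_simps csc_scaleR)
  then show ?thesis
    by (simp only:) (rule has_vector_derivative_mexp, simp add: matrix_expand csc_expand)
qed

lemma Xi_c_commute: "S ** Xi_c S x t = Xi_c S x t ** S"
  unfolding Xi_c_def by (rule mexp_commute) (simp add: matrix_expand csc_expand)

lemma sylvester_cont_rules:
  fixes S K :: "complex^'n^'n" and U :: "complex^'n^'m" and V :: "complex^'m^'n"
  assumes Sy: "S ** K + K ** mconj S = V ** U"
  shows "S ** K = V ** U - K ** mconj S"
    "\<And>Z::complex^'p^'n. S ** (K ** Z) = V ** (U ** Z) - K ** (mconj S ** Z)"
    "mconj S ** mconj K = mconj V ** mconj U - mconj K ** S"
    "\<And>Z::complex^'p^'n. mconj S ** (mconj K ** Z) = mconj V ** (mconj U ** Z) - mconj K ** (S ** Z)"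
proof -
  show S1: "S ** K = V ** U - K ** mconj S" using Sy by (simp add: algebra_simps)
  have "mconj (S ** K + K ** mconj S) = mconj (V ** U)" using Sy by simp
  then show S2: "mconj S ** mconj K = mconj V ** mconj U - mconj K ** S"
    by (simp add: mconj_distrib algebra_simps)
  show "S ** (K ** Z) = V ** (U ** Z) - K ** (mconj S ** Z)" for Z :: "complex^'p^'n"
    by (simp add: matrix_mul_assoc S1 matrix_diff_rdistrib)
  show "mconj S ** (mconj K ** Z) = mconj V ** (mconj U ** Z) - mconj K ** (S ** Z)" for Z :: "complex^'p^'n"
    by (simp add: matrix_mul_assoc S2 matrix_diff_rdistrib)
qed

text \<open>The first and second \<open>x\<close>-derivatives of \<open>A\<close> along \<open>\<Xi>\<^sub>x = -S \<Xi>\<close>, which also gives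
  \<open>\<Xi>\<^sub>t = -\<i> S\<^sup>2 \<Xi>\<close>: \<open>A\<^sub>x = D\<close>, \<open>D\<^sub>x = D\<^sub>2\<close>, \<open>A\<^sub>t = -\<i> D\<^sub>2\<close>.\<close>
definition cont_D :: "real \<Rightarrow> complex^'n^'n \<Rightarrow> complex^'n^'n \<Rightarrow> complex^'n^'n \<Rightarrow> complex^'n^'n" where
  "cont_D \<epsilon> S K Xi = matrix_inv (mconj Xi) ** mconj S + \<epsilon> *\<^sub>R (mconj K ** (S ** (Xi ** K)))"

definition cont_D2 :: "real \<Rightarrow> complex^'n^'n \<Rightarrow> complex^'n^'n \<Rightarrow> complex^'n^'n \<Rightarrow> complex^'n^'n" where
  "cont_D2 \<epsilon> S K Xi = matrix_inv (mconj Xi) ** (mconj S ** mconj S) - \<epsilon> *\<^sub>R (mconj K ** (S ** (S ** (Xi ** K))))"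

lemma qden_deriv_x: "invertible (mconj Xi) \<Longrightarrow> qden_deriv \<epsilon> K Xi (- S ** Xi) = cont_D \<epsilon> S K Xi"
  by (simp add: qden_deriv_def cont_D_def mconj_distrib matrix_expand matrix_inv_cancel)

lemma qden_deriv_t:
  "invertible (mconj Xi) \<Longrightarrow> qden_deriv \<epsilon> K Xi (- csc \<i> (S ** S) ** Xi) = - csc \<i> (cont_D2 \<epsilon> S K Xi)"
  by (simp add: qden_deriv_def cont_D2_def mconj_distrib mconj_csc csc_negc matrix_expand csc_expand
      matrix_inv_cancel algebra_simps)

lemma has_vector_derivative_cont_D:
  fixes Xi :: "real \<Rightarrow> complex^'n^'n"
  assumes d: "(Xi has_vector_derivative (- S) ** Xi s) (at s)" and i: "invertible (mconj (Xi s))"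
  shows "((\<lambda>y. cont_D \<epsilon> S K (Xi y)) has_vector_derivative cont_D2 \<epsilon> S K (Xi s)) (at s)"
proof -
  have "((\<lambda>y. matrix_inv (mconj (Xi y)) ** mconj S + \<epsilon> *\<^sub>R (mconj K ** (S ** (Xi y ** K)))) has_vector_derivative
      - (matrix_inv (mconj (Xi s)) ** mconj ((- S) ** Xi s) ** matrix_inv (mconj (Xi s))) ** mconj S
      + \<epsilon> *\<^sub>R (mconj K ** (S ** (((- S) ** Xi s) ** K)))) (at s)"
    by (intro has_vector_derivative_add has_vector_derivative_matrix_inv has_vector_derivative_mconj
        has_vector_derivative_matrix_rules d i)
  then show ?thesis
    unfolding cont_D_def cont_D2_def by (simp add: mconj_distrib matrix_expand matrix_inv_cancel[OF i])
qed

text \<open>Via the Sylvester equation, \<open>D\<close> and \<open>D\<^sub>2\<close> are \<open>A\<close> multiplied by \<open>S\<^sup>*\<close> plus rank-\<open>m\<close> terms.\<close>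
lemma cont_D_forms:
  fixes S K Xi :: "complex^'n^'n" and U :: "complex^'n^'m" and V :: "complex^'m^'n"
  assumes Sy: "S ** K + K ** mconj S = V ** U" and cm: "S ** Xi = Xi ** S" and iTh: "invertible (mconj Xi)"
  shows "cont_D \<epsilon> S K Xi = qden \<epsilon> K Xi ** mconj S + \<epsilon> *\<^sub>R (mconj K ** (Xi ** (V ** U)))"
    "cont_D \<epsilon> S K Xi = mconj S ** qden \<epsilon> K Xi + \<epsilon> *\<^sub>R (mconj V ** (mconj U ** (Xi ** K)))"
    "cont_D2 \<epsilon> S K Xi = mconj S ** (mconj S ** qden \<epsilon> K Xi)
       + \<epsilon> *\<^sub>R (mconj S ** (mconj V ** (mconj U ** (Xi ** K)))) - \<epsilon> *\<^sub>R (mconj V ** (mconj U ** (S ** (Xi ** K))))"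
    "qden \<epsilon> K Xi ** mconj S - mconj S ** qden \<epsilon> K Xi
       = \<epsilon> *\<^sub>R (mconj V ** (mconj U ** (Xi ** K))) - \<epsilon> *\<^sub>R (mconj K ** (Xi ** (V ** U)))"
proof -
  have c: "matrix_inv (mconj Xi) ** mconj S = mconj S ** matrix_inv (mconj Xi)"
    using matrix_inv_commute[OF _ iTh] arg_cong[OF cm, of mconj] by (simp add: mconj_mult)
  note rules = sylvester_cont_rules[OF Sy] commute_mul_right[OF cm] c commute_mul_right[OF c]
  show "cont_D \<epsilon> S K Xi = qden \<epsilon> K Xi ** mconj S + \<epsilon> *\<^sub>R (mconj K ** (Xi ** (V ** U)))"
    unfolding cont_D_def qden_def by (simp add: matrix_expand rules algebra_simps)
  show "cont_D \<epsilon> S K Xi = mconj S ** qden \<epsilon> K Xi + \<epsilon> *\<^sub>R (mconj V ** (mconj U ** (Xi ** K)))"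
    unfolding cont_D_def qden_def by (simp add: matrix_expand rules algebra_simps)
  show "cont_D2 \<epsilon> S K Xi = mconj S ** (mconj S ** qden \<epsilon> K Xi)
       + \<epsilon> *\<^sub>R (mconj S ** (mconj V ** (mconj U ** (Xi ** K)))) - \<epsilon> *\<^sub>R (mconj V ** (mconj U ** (S ** (Xi ** K))))"
    unfolding cont_D2_def qden_def by (simp add: matrix_expand rules algebra_simps)
  show "qden \<epsilon> K Xi ** mconj S - mconj S ** qden \<epsilon> K Xi
       = \<epsilon> *\<^sub>R (mconj V ** (mconj U ** (Xi ** K))) - \<epsilon> *\<^sub>R (mconj K ** (Xi ** (V ** U)))"
    unfolding qden_def by (simp add: matrix_expand rules algebra_simps)
qed

lemma cont_resolvent_forms:
  fixes S K Xi :: "complex^'n^'n" and U :: "complex^'n^'m" and V :: "complex^'m^'n"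
  assumes Sy: "S ** K + K ** mconj S = V ** U" and cm: "S ** Xi = Xi ** S" and ok: "inv_ok \<epsilon> K Xi"
  defines "R \<equiv> qres \<epsilon> K Xi" and "D \<equiv> cont_D \<epsilon> S K Xi"
  shows "R ** (D ** R) = mconj S ** R + \<epsilon> *\<^sub>R (R ** (mconj K ** (Xi ** (V ** (U ** R)))))"
    "D ** R = mconj S + \<epsilon> *\<^sub>R (mconj V ** (mconj U ** (Xi ** (K ** R))))"
    "R ** (cont_D2 \<epsilon> S K Xi ** R) = R ** (mconj S ** mconj S)
       + \<epsilon> *\<^sub>R (R ** (mconj S ** (mconj V ** (mconj U ** (Xi ** (K ** R))))))
       - \<epsilon> *\<^sub>R (R ** (mconj V ** (mconj U ** (S ** (Xi ** (K ** R))))))"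
    "mconj S ** R = R ** mconj S + \<epsilon> *\<^sub>R (R ** (mconj V ** (mconj U ** (Xi ** (K ** R)))))
       - \<epsilon> *\<^sub>R (R ** (mconj K ** (Xi ** (V ** (U ** R)))))"
proof -
  note i = inv_ok_invertible[OF ok]
  note forms = cont_D_forms[OF Sy cm i(2), of \<epsilon>]
  note cancel = matrix_inv_cancel[OF i(3), folded R_def]
  show "R ** (D ** R) = mconj S ** R + \<epsilon> *\<^sub>R (R ** (mconj K ** (Xi ** (V ** (U ** R)))))"
    unfolding D_def forms(1) by (simp add: matrix_expand cancel)
  show "D ** R = mconj S + \<epsilon> *\<^sub>R (mconj V ** (mconj U ** (Xi ** (K ** R))))"
    unfolding D_def forms(2) by (simp add: matrix_expand cancel)
  show "R ** (cont_D2 \<epsilon> S K Xi ** R) = R ** (mconj S ** mconj S)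
       + \<epsilon> *\<^sub>R (R ** (mconj S ** (mconj V ** (mconj U ** (Xi ** (K ** R))))))
       - \<epsilon> *\<^sub>R (R ** (mconj V ** (mconj U ** (S ** (Xi ** (K ** R))))))"
    unfolding forms(3) by (simp add: matrix_expand cancel)
  have "R ** (qden \<epsilon> K Xi ** mconj S - mconj S ** qden \<epsilon> K Xi) ** R
      = R ** (\<epsilon> *\<^sub>R (mconj V ** (mconj U ** (Xi ** K))) - \<epsilon> *\<^sub>R (mconj K ** (Xi ** (V ** U)))) ** R"
    by (simp only: forms(4))
  then show "mconj S ** R = R ** mconj S + \<epsilon> *\<^sub>R (R ** (mconj V ** (mconj U ** (Xi ** (K ** R)))))
       - \<epsilon> *\<^sub>R (R ** (mconj K ** (Xi ** (V ** (U ** R)))))"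
    by (simp add: matrix_expand cancel algebra_simps)
qed

lemma cont_cubic_identity:
  fixes S K Xi :: "complex^'n^'n" and U :: "complex^'n^'m" and V :: "complex^'m^'n"
  assumes eps: "\<epsilon> * \<epsilon> = 1" and sig: "\<sigma> * \<sigma> = 1"
    and Sy: "S ** K + K ** mconj S = V ** U" and cm: "S ** Xi = Xi ** S" and ok: "inv_ok \<epsilon> K Xi"
  defines "R \<equiv> qres \<epsilon> K Xi" and "D \<equiv> cont_D \<epsilon> S K Xi"
  shows "\<sigma> *\<^sub>R (U ** ((R ** (D ** (R ** (D ** R))) - R ** (cont_D2 \<epsilon> S K Xi ** R)) ** mconj V))
       = \<epsilon> *\<^sub>R (qsol \<sigma> \<epsilon> U V K Xi ** mconj (qsol \<sigma> \<epsilon> U V K Xi) ** qsol \<sigma> \<epsilon> U V K Xi)"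
proof -
  note forms = cont_resolvent_forms[OF Sy cm ok, folded R_def D_def]
  have TR: "mconj S ** (R ** Z) = R ** (mconj S ** Z) + \<epsilon> *\<^sub>R (R ** (mconj V ** (mconj U ** (Xi ** (K ** (R ** Z))))))
       - \<epsilon> *\<^sub>R (R ** (mconj K ** (Xi ** (V ** (U ** (R ** Z))))))" for Z :: "complex^'p^'n"
    by (simp add: matrix_mul_assoc forms(4) matrix_add_rdistrib matrix_diff_rdistrib matrix_mul_scaleR_left)
  have "R ** (D ** (R ** (D ** R))) = (R ** (D ** R)) ** (D ** R)" by (simp add: matrix_mul_assoc)
  also have "\<dots> = (mconj S ** R + \<epsilon> *\<^sub>R (R ** (mconj K ** (Xi ** (V ** (U ** R))))))
      ** (mconj S + \<epsilon> *\<^sub>R (mconj V ** (mconj U ** (Xi ** (K ** R)))))"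
    by (simp only: forms(1)) (simp only: forms(2))
  finally have "R ** (D ** (R ** (D ** R))) - R ** (cont_D2 \<epsilon> S K Xi ** R)
      = \<epsilon> *\<^sub>R (R ** (mconj V ** (mconj U ** (Xi ** (V ** (U ** R))))))
        + R ** (mconj V ** (mconj U ** (Xi ** (K ** (R ** (mconj K ** (Xi ** (V ** (U ** R)))))))))"
    unfolding forms(3)
    by (simp add: matrix_expand forms(4) TR sylvester_cont_rules[OF Sy] commute_mul_right[OF cm] eps
        algebra_simps)
  moreover have "mconj (qsol \<sigma> \<epsilon> U V K Xi)
      = \<sigma> *\<^sub>R (mconj U ** ((Xi + \<epsilon> *\<^sub>R (Xi ** (K ** (R ** (mconj K ** Xi))))) ** V))"
    by (simp add: mconj_qsol[OF ok] pres_expand[OF ok] R_def)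
  ultimately show ?thesis
    by (simp add: qsol_eq R_def[symmetric] matrix_expand sig eps algebra_simps)
qed

text \<open>The \<open>p\<close>-equation: \<open>R D R K\<^sup>* \<Xi> + R K\<^sup>* S \<Xi> = R V\<^sup>* U\<^sup>* Q\<close>, which makes \<open>p\<^sub>x = -\<epsilon> q q\<^sup>*\<close>.\<close>
lemma cont_p_identity:
  fixes S K Xi :: "complex^'n^'n" and U :: "complex^'n^'m" and V :: "complex^'m^'n"
  assumes Sy: "S ** K + K ** mconj S = V ** U" and cm: "S ** Xi = Xi ** S" and ok: "inv_ok \<epsilon> K Xi"
  defines "R \<equiv> qres \<epsilon> K Xi" and "D \<equiv> cont_D \<epsilon> S K Xi"
  shows "R ** (D ** (R ** (mconj K ** Xi))) + R ** (mconj K ** (S ** Xi))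
       = R ** (mconj V ** (mconj U ** pres \<epsilon> K Xi))"
proof -
  note forms = cont_resolvent_forms[OF Sy cm ok, folded R_def D_def]
  have "R ** (D ** (R ** (mconj K ** Xi))) = R ** ((D ** R) ** (mconj K ** Xi))"
    by (simp add: matrix_mul_assoc)
  also have "\<dots> = R ** ((mconj S + \<epsilon> *\<^sub>R (mconj V ** (mconj U ** (Xi ** (K ** R))))) ** (mconj K ** Xi))"
    by (simp only: forms(2))
  finally show ?thesis
    by (simp add: pres_expand[OF ok] R_def[symmetric] matrix_expand sylvester_cont_rules[OF Sy])
qed

lemma eventually_inv_ok:
  fixes Xi :: "real \<Rightarrow> complex^'n^'n"
  assumes d: "(Xi has_vector_derivative D) (at x)" and ok: "inv_ok \<epsilon> K (Xi x)"
    and iX: "\<And>y. invertible (Xi y)"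
  shows "\<forall>\<^sub>F y in nhds x. inv_ok \<epsilon> K (Xi y)"
proof -
  have "isCont (\<lambda>y. qden \<epsilon> K (Xi y)) x"
    using has_vector_derivative_qden[OF d inv_ok_invertible(2)[OF ok]] has_vector_derivative_continuous
    by blast
  then have "\<forall>\<^sub>F y in nhds x. invertible (qden \<epsilon> K (Xi y))"
    using eventually_invertible inv_ok_invertible(3)[OF ok] by blast
  then show ?thesis
  proof (rule eventually_mono)
    fix y assume iA: "invertible (qden \<epsilon> K (Xi y))"
    have "invertible (pden \<epsilon> K (Xi y))" using invertible_mconj[OF iA] mconj_qden[OF iX] by simp
    then show "inv_ok \<epsilon> K (Xi y)"
      using iA iX invertible_mconj[OF iX] by (simp add: inv_ok_def qden_def pden_def matrix_mul_assoc)
  qed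
qed

lemma cont_qx:
  fixes Xi :: "real \<Rightarrow> complex^'n^'n"
  assumes dX: "\<And>y. (Xi has_vector_derivative (- S) ** Xi y) (at y)" and iX: "\<And>y. invertible (Xi y)"
    and ok: "inv_ok \<epsilon> K (Xi x)"
  shows "\<forall>\<^sub>F y in nhds x. ((\<lambda>z. qsol \<sigma> \<epsilon> U V K (Xi z)) has_vector_derivative
      - (\<sigma> *\<^sub>R (U ** (qres \<epsilon> K (Xi y) ** (cont_D \<epsilon> S K (Xi y) ** (qres \<epsilon> K (Xi y) ** mconj V)))))) (at y)"
  using eventually_inv_ok[OF dX ok iX]
proof (rule eventually_mono)
  fix y assume "inv_ok \<epsilon> K (Xi y)"
  from has_vector_derivative_qsol[OF dX this, of \<sigma> U V]
  show "((\<lambda>z. qsol \<sigma> \<epsilon> U V K (Xi z)) has_vector_derivative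
      - (\<sigma> *\<^sub>R (U ** (qres \<epsilon> K (Xi y) ** (cont_D \<epsilon> S K (Xi y) ** (qres \<epsilon> K (Xi y) ** mconj V)))))) (at y)"
    by (simp only: qden_deriv_x[OF invertible_mconj[OF iX]])
qed

lemma cont_qxx:
  fixes Xi :: "real \<Rightarrow> complex^'n^'n"
  assumes dX: "(Xi has_vector_derivative (- S) ** Xi x) (at x)" and ok: "inv_ok \<epsilon> K (Xi x)"
  defines "R \<equiv> qres \<epsilon> K (Xi x)" and "D \<equiv> cont_D \<epsilon> S K (Xi x)"
  shows "((\<lambda>y. - (\<sigma> *\<^sub>R (U ** (qres \<epsilon> K (Xi y) ** (cont_D \<epsilon> S K (Xi y) ** (qres \<epsilon> K (Xi y) ** mconj V))))))
     has_vector_derivative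
       \<sigma> *\<^sub>R (U ** ((R ** (D ** (R ** (D ** R))) + R ** (D ** (R ** (D ** R)))
         - R ** (cont_D2 \<epsilon> S K (Xi x) ** R)) ** mconj V))) (at x)"
proof -
  have dR: "((\<lambda>y. qres \<epsilon> K (Xi y)) has_vector_derivative - (R ** (D ** R))) (at x)"
    using has_vector_derivative_qres[OF dX ok]
    by (simp add: R_def D_def qden_deriv_x[OF inv_ok_invertible(2)[OF ok]])
  have dD: "((\<lambda>y. cont_D \<epsilon> S K (Xi y)) has_vector_derivative cont_D2 \<epsilon> S K (Xi x)) (at x)"
    by (rule has_vector_derivative_cont_D[OF dX inv_ok_invertible(2)[OF ok]])
  have "((\<lambda>y. qres \<epsilon> K (Xi y) ** (cont_D \<epsilon> S K (Xi y) ** (qres \<epsilon> K (Xi y) ** mconj V))) has_vector_derivative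
      R ** (D ** (- (R ** (D ** R)) ** mconj V) + cont_D2 \<epsilon> S K (Xi x) ** (R ** mconj V))
      + - (R ** (D ** R)) ** (D ** (R ** mconj V))) (at x)"
    using has_vector_derivative_matrix_mul[OF dR has_vector_derivative_matrix_mul[OF dD
          has_vector_derivative_mul_const_right[OF dR]]]
    by (simp add: R_def D_def)
  from has_vector_derivative_minus[OF has_vector_derivative_matrix_rules(3)[OF
        has_vector_derivative_mul_const_left[OF this]], of \<sigma> U]
  show ?thesis
    by (simp only: matrix_expand scaleR_add_right scaleR_diff_right scaleR_minus_right minus_add_distrib
        minus_minus diff_conv_add_uminus add_ac)
qed

lemma cont_px:
  fixes Xi :: "real \<Rightarrow> complex^'n^'n"
  assumes sig: "\<sigma> * \<sigma> = 1" and Sy: "S ** K + K ** mconj S = V ** U"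
    and dX: "\<And>y. (Xi has_vector_derivative (- S) ** Xi y) (at y)" and iX: "\<And>y. invertible (Xi y)"
    and cm: "S ** Xi x = Xi x ** S" and ok: "inv_ok \<epsilon> K (Xi x)"
  shows "((\<lambda>y. psol \<epsilon> U V K (Xi y)) has_vector_derivative
      - \<epsilon> *\<^sub>R (qsol \<sigma> \<epsilon> U V K (Xi x) ** mconj (qsol \<sigma> \<epsilon> U V K (Xi x)))) (at x)"
proof -
  let ?R = "qres \<epsilon> K (Xi x)" and ?D = "cont_D \<epsilon> S K (Xi x)"
  have ev: "\<forall>\<^sub>F y in nhds x. psol \<epsilon> U V K (Xi y) = \<epsilon> *\<^sub>R (U ** (qres \<epsilon> K (Xi y) ** (mconj K ** (Xi y ** V))))"
    using eventually_inv_ok[OF dX ok iX] by (rule eventually_mono) (rule psol_eq)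
  have dR: "((\<lambda>y. qres \<epsilon> K (Xi y)) has_vector_derivative - (?R ** (?D ** ?R))) (at x)"
    using has_vector_derivative_qres[OF dX ok] by (simp add: qden_deriv_x[OF inv_ok_invertible(2)[OF ok]])
  have "((\<lambda>y. \<epsilon> *\<^sub>R (U ** (qres \<epsilon> K (Xi y) ** (mconj K ** (Xi y ** V))))) has_vector_derivative
      \<epsilon> *\<^sub>R (U ** (?R ** (mconj K ** (((- S) ** Xi x) ** V)) + - (?R ** (?D ** ?R)) ** (mconj K ** (Xi x ** V))))) (at x)"
    by (intro has_vector_derivative_matrix_rules has_vector_derivative_matrix_mul dR dX)
  also have "\<epsilon> *\<^sub>R (U ** (?R ** (mconj K ** (((- S) ** Xi x) ** V)) + - (?R ** (?D ** ?R)) ** (mconj K ** (Xi x ** V))))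
      = - \<epsilon> *\<^sub>R (U ** ((?R ** (?D ** (?R ** (mconj K ** Xi x))) + ?R ** (mconj K ** (S ** Xi x))) ** V))"
    by (simp add: matrix_expand algebra_simps)
  also have "\<dots> = - \<epsilon> *\<^sub>R (qsol \<sigma> \<epsilon> U V K (Xi x) ** mconj (qsol \<sigma> \<epsilon> U V K (Xi x)))"
    unfolding cont_p_identity[OF Sy cm ok] mconj_qsol[OF ok] by (simp add: qsol_eq matrix_expand sig)
  finally have d: "((\<lambda>y. \<epsilon> *\<^sub>R (U ** (qres \<epsilon> K (Xi y) ** (mconj K ** (Xi y ** V))))) has_vector_derivative
      - \<epsilon> *\<^sub>R (qsol \<sigma> \<epsilon> U V K (Xi x) ** mconj (qsol \<sigma> \<epsilon> U V K (Xi x)))) (at x)" .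
  have ev': "\<forall>\<^sub>F y in nhds x. y \<in> UNIV \<longrightarrow>
      psol \<epsilon> U V K (Xi y) = \<epsilon> *\<^sub>R (U ** (qres \<epsilon> K (Xi y) ** (mconj K ** (Xi y ** V))))"
    using ev by (rule eventually_mono) simp
  show ?thesis by (rule iffD2[OF has_vector_derivative_cong_ev[OF ev' eventually_nhds_x_imp_x[OF ev]] d])
qed

text \<open>The bookkeeping behind \<open>\<i> q\<^sub>t + q\<^sub>x\<^sub>x - 2\<epsilon> q q\<^sup>* q = 0\<close>.\<close>
lemma cont_assemble:
  fixes a b c P Q :: "'a::real_vector"
  assumes "a = - Q" "b = P + P - Q" "\<epsilon> *\<^sub>R c = P - Q"
  shows "a + b - (2 * \<epsilon>) *\<^sub>R c = 0"
proof -
  have "(2 * \<epsilon>) *\<^sub>R c = (P - Q) + (P - Q)" by (simp add: assms(3) scaleR_2 flip: scaleR_scaleR)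
  then show ?thesis by (simp add: assms(1,2) algebra_simps)
qed

text \<open>The continuous NLS equation in terms of the resolvent data at one point: the
  \<open>t\<close>-derivative contributes \<open>-\<i> D\<^sub>2\<close> to \<open>A\<^sub>t\<close>, the \<open>x\<close>-derivatives \<open>2 R D R D R - R D\<^sub>2 R\<close>.\<close>
lemma continuous_equation:
  fixes S K Xi :: "complex^'n^'n" and U :: "complex^'n^'m" and V :: "complex^'m^'n"
  assumes eps: "\<epsilon> * \<epsilon> = 1" and sig: "\<sigma> * \<sigma> = 1"
    and Sy: "S ** K + K ** mconj S = V ** U" and cm: "S ** Xi = Xi ** S" and ok: "inv_ok \<epsilon> K Xi"
  defines "R \<equiv> qres \<epsilon> K Xi" and "D \<equiv> cont_D \<epsilon> S K Xi" and "D2 \<equiv> cont_D2 \<epsilon> S K Xi"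
    and "q \<equiv> qsol \<sigma> \<epsilon> U V K Xi"
  shows "csc \<i> (- (\<sigma> *\<^sub>R (U ** (R ** (- csc \<i> D2 ** (R ** mconj V))))))
      + \<sigma> *\<^sub>R (U ** ((R ** (D ** (R ** (D ** R))) + R ** (D ** (R ** (D ** R))) - R ** (D2 ** R)) ** mconj V))
      - (2 * \<epsilon>) *\<^sub>R (q ** mconj q ** q) = 0"
proof (rule cont_assemble)
  show "csc \<i> (- (\<sigma> *\<^sub>R (U ** (R ** (- csc \<i> D2 ** (R ** mconj V))))))
      = - (\<sigma> *\<^sub>R (U ** (R ** (D2 ** (R ** mconj V)))))"
    by (simp add: matrix_expand csc_expand csc_minus_one)
  show "\<epsilon> *\<^sub>R (q ** mconj q ** q)
      = \<sigma> *\<^sub>R (U ** (R ** (D ** (R ** (D ** (R ** mconj V)))))) - \<sigma> *\<^sub>R (U ** (R ** (D2 ** (R ** mconj V))))"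
    using cont_cubic_identity[OF eps sig Sy cm ok]
    by (simp add: R_def D_def D2_def q_def matrix_expand scaleR_diff_right)
qed (simp only: matrix_expand scaleR_add_right scaleR_diff_right)

text \<open>The continuous case: \<open>\<Xi> = exp(-x S - \<i> t S\<^sup>2)\<close> is a flow in \<open>x\<close> and in \<open>t\<close>.\<close>
theorem continuous_case:
  fixes S K :: "complex^'n^'n" and U :: "complex^'n^'m" and V :: "complex^'m^'n" and x t :: real
  assumes eps: "\<epsilon> * \<epsilon> = 1" and sig: "\<sigma> * \<sigma> = 1"
    and Sy: "S ** K + K ** mconj S = V ** U" and ok: "inv_ok \<epsilon> K (Xi_c S x t)"
  defines "q \<equiv> \<lambda>x t. qsol \<sigma> \<epsilon> U V K (Xi_c S x t)" and "p \<equiv> \<lambda>x t. psol \<epsilon> U V K (Xi_c S x t)"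
  shows "\<exists>Qx qxx qt px.
        (\<forall>\<^sub>F y in nhds x. ((\<lambda>z. q z t) has_vector_derivative Qx y) (at y))
      \<and> (Qx has_vector_derivative qxx) (at x)
      \<and> ((\<lambda>s. q x s) has_vector_derivative qt) (at t)
      \<and> ((\<lambda>y. p y t) has_vector_derivative px) (at x)
      \<and> csc \<i> qt + qxx - (2 * \<epsilon>) *\<^sub>R (q x t ** mconj (q x t) ** q x t) = 0
      \<and> px = - \<epsilon> *\<^sub>R (q x t ** mconj (q x t))"
proof -
  define Xi where "Xi = (\<lambda>y. Xi_c S y t)"
  have dX: "(Xi has_vector_derivative (- S) ** Xi y) (at y)" for y unfolding Xi_def by (rule Xi_c_dx)
  have iX: "invertible (Xi y)" for y unfolding Xi_def Xi_c_def by (rule invertible_mexp)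
  have ok0: "inv_ok \<epsilon> K (Xi x)" and cm: "S ** Xi x = Xi x ** S"
    using ok Xi_c_commute by (simp_all add: Xi_def)
  have dqt: "((\<lambda>s. q x s) has_vector_derivative
      - (\<sigma> *\<^sub>R (U ** (qres \<epsilon> K (Xi x) ** (- csc \<i> (cont_D2 \<epsilon> S K (Xi x)) ** (qres \<epsilon> K (Xi x) ** mconj V)))))) (at t)"
    using has_vector_derivative_qsol[OF Xi_c_dt ok, of \<sigma> U V]
    unfolding qden_deriv_t[OF inv_ok_invertible(2)[OF ok]] by (simp add: q_def Xi_def)
  show ?thesis
    using cont_qx[OF dX iX ok0, of \<sigma> U V] cont_qxx[OF dX ok0, of \<sigma> U V] dqt
      cont_px[OF sig Sy dX iX cm ok0] continuous_equation[OF eps sig Sy cm ok0]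
    unfolding q_def p_def Xi_def by (intro exI conjI) (assumption | rule refl)+
qed

theorem proposition6p1:
  fixes \<epsilon> \<sigma> :: real
    and S K :: "complex^'n^'n" and U :: "complex^'n^'m" and V :: "complex^'m^'n"
  assumes eps: "\<epsilon> \<in> {1, -1}" and sig: "\<sigma> \<in> {1, -1}"
  shows
  \<comment> \<open>continuous case\<close>
  "(S ** K + K ** mconj S = V ** U \<longrightarrow>
      (\<forall>x t. inv_ok \<epsilon> K (Xi_c S x t) \<longrightarrow>
        (let q = (\<lambda>x t. qsol \<sigma> \<epsilon> U V K (Xi_c S x t));
             p = (\<lambda>x t. psol \<epsilon> U V K (Xi_c S x t))
         in \<exists>Qx qxx qt px.
              (\<forall>\<^sub>F y in nhds x. ((\<lambda>z. q z t) has_vector_derivative Qx y) (at y))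
            \<and> (Qx has_vector_derivative qxx) (at x)
            \<and> ((\<lambda>s. q x s) has_vector_derivative qt) (at t)
            \<and> ((\<lambda>y. p y t) has_vector_derivative px) (at x)
            \<and> csc \<i> qt + qxx - (2 * \<epsilon>) *\<^sub>R (q x t ** mconj (q x t) ** q x t) = 0
            \<and> px = - \<epsilon> *\<^sub>R (q x t ** mconj (q x t)))))
   \<and>
  \<comment> \<open>semi-discrete case\<close>
   (invertible S \<and> matrix_inv S ** K - K ** mconj S = V ** U \<longrightarrow>
      (\<forall>(x::int) (t::real). inv_ok \<epsilon> K (Xi_sd S (x - 1) t) \<and> inv_ok \<epsilon> K (Xi_sd S x t)
            \<and> inv_ok \<epsilon> K (Xi_sd S (x + 1) t) \<longrightarrow>
        (let q = (\<lambda>x t. qsol \<sigma> \<epsilon> U V K (Xi_sd S x t));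
             p = (\<lambda>x t. psol \<epsilon> U V K (Xi_sd S x t))
         in \<exists>qt.
              ((\<lambda>s. q x s) has_vector_derivative qt) (at t)
            \<and> csc \<i> qt + q (x + 1) t - 2 *\<^sub>R q x t + q (x - 1) t
                - \<epsilon> *\<^sub>R (q (x + 1) t ** mconj (q x t) ** q x t
                          + q x t ** mconj (q x t) ** q (x - 1) t) = 0
            \<and> p (x + 1) t - p x t = - \<epsilon> *\<^sub>R (q (x + 1) t ** mconj (q x t)))))
   \<and>
  \<comment> \<open>fully discrete case\<close>
   (invertible S \<and> invertible (mat 1 - csc \<i> (mat 1 - S))
      \<and> invertible (mat 1 + csc \<i> (mat 1 - matrix_inv S))
      \<and> matrix_inv S ** K - K ** mconj S = V ** U \<longrightarrow>
      (\<forall>(x::int) (t::int). inv_ok \<epsilon> K (Xi_fd S x t) \<and> inv_ok \<epsilon> K (Xi_fd S (x + 1) t)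
            \<and> inv_ok \<epsilon> K (Xi_fd S (x - 1) t) \<and> inv_ok \<epsilon> K (Xi_fd S x (t + 1))
            \<and> inv_ok \<epsilon> K (Xi_fd S (x + 1) (t + 1)) \<longrightarrow>
        (let q = (\<lambda>x t. qsol \<sigma> \<epsilon> U V K (Xi_fd S x t));
             p = (\<lambda>x t. psol \<epsilon> U V K (Xi_fd S x t))
         in csc \<i> (q x (t + 1) - q x t)
              + (q (x + 1) (t + 1) - q x (t + 1))
              - (q x t - q (x - 1) t)
              - \<epsilon> *\<^sub>R (q (x + 1) (t + 1) ** mconj (q x (t + 1)) ** q x (t + 1))
              - \<epsilon> *\<^sub>R (q x t ** mconj (q x t) ** q (x - 1) t)
              + (p x (t + 1) - p x t) ** q x (t + 1)
              + q x t ** mconj (p x (t + 1) - p x t) = 0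
            \<and> p (x + 1) t - p x t = - \<epsilon> *\<^sub>R (q (x + 1) t ** mconj (q x t)))))"
proof -
  have e2: "\<epsilon> * \<epsilon> = 1" and s2: "\<sigma> * \<sigma> = 1" using eps sig by auto
  show ?thesis
    unfolding Let_def
    using continuous_case[OF e2 s2] semi_discrete_case[OF e2 s2] fully_discrete_case[OF e2 s2]
    by blast
qed

end
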